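(* Let $\mathcal H_A=\mathcal H_B=\mathbb C^3$ and consider the nine product states $|0\rangle|0\pm1\rangle$, $|0\pm1\rangle|2\rangle$, $|2\rangle|1\pm2\rangle$, $|1\pm2\rangle|0\rangle$, $|1\rangle|1\rangle$ (first factor Alice's, second Bob's). (a) If $|\Phi\rangle\in\mathcal H_{A'}\otimes\mathcal H_{B'}$ is such that these nine states tensored with $|\Phi\rangle$ are perfectly distinguishable by one-way LOCC from Alice to Bob, then the Schmidt rank of $|\Phi\rangle$ is at least $3$ (and rank $3$ suffices). (b) There is a state $|\Phi\rangle$ of Schmidt rank $2$ (an EPR pair) such that the nine states tensored with $|\Phi\rangle$ are perfectly distinguishable by finite-round two-way LOCC.
   Context: $|a\pm b\rangle:=(|a\rangle\pm|b\rangle)/\sqrt2$ with $\{|0\rangle,|1\rangle,|2\rangle\}$ the computational basis of $\mathbb C^3$. Alice holds $\mathcal H_A\otimes\mathcal H_{A'}$ and Bob holds $\mathcal H_B\otimes\mathcal H_{B'}$. One-way LOCC distinguishability: Alice measures, sends her outcome to Bob, Bob measures depending on it, and the outcomes identify the state with certainty. Two-way LOCC: finitely many alternating rounds of local measurements with classical communication in both directions. *)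

theory Defs
  imports Complex_Main
begin

text \<open>Finite-dimensional vectors/matrices are represented by functions on natural
indices with explicit dimension bounds.  A pure bipartite state of a system with
Alice dimension dA and Bob dimension dB is represented by its coefficient matrix
psi :: nat => nat => complex, psi a b being the amplitude of basis vector |a>|b>
(a < dA, b < dB).\<close>

type_synonym cvec = "nat \<Rightarrow> complex"
type_synonym cmat = "nat \<Rightarrow> nat \<Rightarrow> complex"

definition ket :: "nat \<Rightarrow> cvec" where
  "ket i = (\<lambda>j. if j = i then 1 else 0)"

definition ket_plus :: "nat \<Rightarrow> nat \<Rightarrow> cvec" where
  "ket_plus a b = (\<lambda>j. (ket a j + ket b j) / complex_of_real (sqrt 2))"

definition ket_minus :: "nat \<Rightarrow> nat \<Rightarrow> cvec" where
  "ket_minus a b = (\<lambda>j. (ket a j - ket b j) / complex_of_real (sqrt 2))"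

definition nine_states :: "(cvec \<times> cvec) list" where
  "nine_states =
    [ (ket 0, ket_plus 0 1), (ket 0, ket_minus 0 1),
      (ket_plus 0 1, ket 2), (ket_minus 0 1, ket 2),
      (ket 2, ket_plus 1 2), (ket 2, ket_minus 1 2),
      (ket_plus 1 2, ket 0), (ket_minus 1 2, ket 0),
      (ket 1, ket 1) ]"

text \<open>|x>_A |y>_B tensored with |Phi> in H_A' x H_B' (dims dA', dB'), regarded as a
bipartite state of Alice (H_A x H_A', dimension 3*dA') versus Bob (H_B x H_B',
dimension 3*dB'), index a = i*dA' + k for |i>_A|k>_A', similarly for Bob.\<close>
definition tensor_anc :: "nat \<Rightarrow> nat \<Rightarrow> cmat \<Rightarrow> cvec \<times> cvec \<Rightarrow> cmat" where
  "tensor_anc dA' dB' Phi xy =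
     (\<lambda>a b. fst xy (a div dA') * snd xy (b div dB') * Phi (a mod dA') (b mod dB'))"

definition unit_state :: "nat \<Rightarrow> nat \<Rightarrow> cmat \<Rightarrow> bool" where
  "unit_state dA dB Phi \<longleftrightarrow> (\<Sum>a<dA. \<Sum>b<dB. (cmod (Phi a b))\<^sup>2) = 1"

text \<open>The Schmidt rank is the
number of terms of a Schmidt decomposition (which is unique; we take the least).\<close>
definition orthonormal_fam :: "nat \<Rightarrow> nat \<Rightarrow> (nat \<Rightarrow> cvec) \<Rightarrow> bool" where
  "orthonormal_fam d r u \<longleftrightarrow>
     (\<forall>s<r. \<forall>t<r. (\<Sum>k<d. cnj (u s k) * u t k) = (if s = t then 1 else 0))"

definition schmidt_decomp :: "nat \<Rightarrow> nat \<Rightarrow> cmat \<Rightarrow> nat \<Rightarrow> bool" where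
  "schmidt_decomp dA dB Phi r \<longleftrightarrow>
     (\<exists>(lam :: nat \<Rightarrow> real) u v.
        (\<forall>t<r. lam t > 0) \<and> orthonormal_fam dA r u \<and> orthonormal_fam dB r v \<and>
        (\<forall>a<dA. \<forall>b<dB. Phi a b = (\<Sum>t<r. complex_of_real (lam t) * u t a * v t b)))"

definition schmidt_rank :: "nat \<Rightarrow> nat \<Rightarrow> cmat \<Rightarrow> nat" where
  "schmidt_rank dA dB Phi = (LEAST r. schmidt_decomp dA dB Phi r)"

text \<open>A quantum instrument (measurement with post-measurement states) from dimension d
to dimension d': finitely many Kraus operators K_m (d' x d matrices) with
sum_m K_m^dagger K_m = identity.\<close>
definition kraus :: "nat \<Rightarrow> nat \<Rightarrow> cmat list \<Rightarrow> bool" where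
  "kraus d d' Ks \<longleftrightarrow>
     (\<forall>i<d. \<forall>j<d. (\<Sum>m<length Ks. \<Sum>r<d'. cnj ((Ks ! m) r i) * (Ks ! m) r j)
                  = (if i = j then 1 else 0))"

definition alice_op :: "nat \<Rightarrow> cmat \<Rightarrow> cmat \<Rightarrow> cmat" where
  "alice_op dA K psi = (\<lambda>a b. \<Sum>c<dA. K a c * psi c b)"

definition bob_op :: "nat \<Rightarrow> cmat \<Rightarrow> cmat \<Rightarrow> cmat" where
  "bob_op dB L psi = (\<lambda>a b. \<Sum>c<dB. L b c * psi a c)"

definition nonzero_state :: "nat \<Rightarrow> nat \<Rightarrow> cmat \<Rightarrow> bool" where
  "nonzero_state dA dB psi \<longleftrightarrow> (\<exists>a<dA. \<exists>b<dB. psi a b \<noteq> 0)"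

text \<open>At the end of a protocol branch the outcomes identify the state with certainty:
at most one of the candidate states has nonzero (unnormalised) post-measurement
state, i.e. nonzero probability of reaching this branch.\<close>
definition identified :: "nat \<Rightarrow> nat \<Rightarrow> cmat list \<Rightarrow> bool" where
  "identified dA dB S \<longleftrightarrow>
     (\<forall>k<length S. \<forall>l<length S. nonzero_state dA dB (S ! k) \<and> nonzero_state dA dB (S ! l)
        \<longrightarrow> k = l)"

text \<open>Perfect discrimination by LOCC with at most n rounds: in each round one party
performs a local instrument (possibly changing the local dimension, e.g. by adding
ancillas), announces the outcome, and the protocol continues depending on all
outcomes so far.\<close>
fun locc_dist :: "nat \<Rightarrow> nat \<Rightarrow> nat \<Rightarrow> cmat list \<Rightarrow> bool" where
  "locc_dist 0 dA dB S = identified dA dB S"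
| "locc_dist (Suc n) dA dB S =
     (locc_dist n dA dB S \<or>
      (\<exists>dA' Ks. kraus dA dA' Ks \<and>
         (\<forall>m<length Ks. locc_dist n dA' dB (map (alice_op dA (Ks ! m)) S))) \<or>
      (\<exists>dB' Ls. kraus dB dB' Ls \<and>
         (\<forall>m<length Ls. locc_dist n dA dB' (map (bob_op dB (Ls ! m)) S))))"

definition two_way_locc_dist :: "nat \<Rightarrow> nat \<Rightarrow> cmat list \<Rightarrow> bool" where
  "two_way_locc_dist dA dB S \<longleftrightarrow> (\<exists>n. locc_dist n dA dB S)"

definition one_way_locc_dist :: "nat \<Rightarrow> nat \<Rightarrow> cmat list \<Rightarrow> bool" where
  "one_way_locc_dist dA dB S \<longleftrightarrow>
     (\<exists>dA' Ks. kraus dA dA' Ks \<and>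
        (\<forall>m<length Ks. \<exists>dB' Ls. kraus dB dB' Ls \<and>
           (\<forall>n<length Ls.
              identified dA' dB' (map (bob_op dB (Ls ! n) \<circ> alice_op dA (Ks ! m)) S))))"

definition nine_with :: "nat \<Rightarrow> nat \<Rightarrow> cmat \<Rightarrow> cmat list" where
  "nine_with dA' dB' Phi = map (tensor_anc dA' dB' Phi) nine_states"

end

theory Submission
  imports Defs "HOL-Analysis.Analysis"
begin

text \<open>
  If Alice measures first and Bob finishes alone, then in every branch of Alice's measurement
  the nine states must still be orthogonal on Bob's side. For the pairs that share Bob's
  factor up to a nonzero overlap, this forces the three vectors of Bob's ancilla that correspond
  to Alice's inputs \<open>|0\<rangle>, |1\<rangle>, |2\<rangle>\<close> to be pairwise orthogonal and of equal norm. They lie in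
  the span of the Schmidt vectors of the resource on Bob's side, so for Schmidt rank below three
  they vanish, i.e. every Kraus operator of Alice annihilates \<open>|0\<rangle>|u\<^sub>0\<rangle>\<close>, contradicting
  completeness. Schmidt rank three suffices by teleporting Alice's qutrit to Bob, who then
  measures in the orthonormal product basis formed by the nine states. With an EPR pair Alice
  first tells Bob, through the pair, whether her qutrit is \<open>|2\<rangle>\<close>; from there a finite two-way tree of local
  measurements separates the states one by one.
\<close>

section \<open>Coordinate inner product\<close>

definition vinner :: "nat \<Rightarrow> cvec \<Rightarrow> cvec \<Rightarrow> complex" where
  "vinner d x y = (\<Sum>k<d. cnj (x k) * y k)"

definition vnorm2 :: "nat \<Rightarrow> cvec \<Rightarrow> real" where
  "vnorm2 d x = (\<Sum>k<d. (cmod (x k))\<^sup>2)"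

lemma cnj_vinner: "cnj (vinner d x y) = vinner d y x"
  by (simp add: vinner_def mult.commute)

lemma vinner_eq_0_commute: "vinner d x y = 0 \<longleftrightarrow> vinner d y x = 0"
  by (metis cnj_vinner complex_cnj_zero_iff)

lemma cnj_mult_self: "cnj z * z = complex_of_real ((cmod z)\<^sup>2)"
  by (metis complex_norm_square mult.commute of_real_power)

lemma vinner_self: "vinner d x x = complex_of_real (vnorm2 d x)"
  by (simp add: vinner_def vnorm2_def cnj_mult_self)

lemma vnorm2_nonneg: "vnorm2 d x \<ge> 0"
  by (simp add: vnorm2_def sum_nonneg)

lemma vnorm2_eq_0_iff: "vnorm2 d x = 0 \<longleftrightarrow> (\<forall>k<d. x k = 0)"
  by (auto simp: vnorm2_def sum_nonneg_eq_0_iff)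

lemma vnorm2_scale: "vnorm2 d (\<lambda>k. c * x k) = (cmod c)\<^sup>2 * vnorm2 d x"
  by (simp add: vnorm2_def norm_mult power_mult_distrib sum_distrib_left)

lemma vinner_cong:
  "(\<And>k. k < d \<Longrightarrow> x k = x' k) \<Longrightarrow> (\<And>k. k < d \<Longrightarrow> y k = y' k) \<Longrightarrow> vinner d x y = vinner d x' y'"
  by (simp add: vinner_def)

lemma vinner_sum_right: "vinner d x (\<lambda>k. \<Sum>t<r. c t * u t k) = (\<Sum>t<r. c t * vinner d x (u t))"
proof -
  have "vinner d x (\<lambda>k. \<Sum>t<r. c t * u t k) = (\<Sum>k<d. \<Sum>t<r. c t * (cnj (x k) * u t k))"
    by (simp add: vinner_def sum_distrib_left mult_ac)
  also have "\<dots> = (\<Sum>t<r. \<Sum>k<d. c t * (cnj (x k) * u t k))" by (rule sum.swap)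
  finally show ?thesis by (simp add: vinner_def sum_distrib_left)
qed

lemma vinner_sum_left: "vinner d (\<lambda>k. \<Sum>t<r. c t * u t k) y = (\<Sum>t<r. cnj (c t) * vinner d (u t) y)"
proof -
  have "vinner d (\<lambda>k. \<Sum>t<r. c t * u t k) y = cnj (vinner d y (\<lambda>k. \<Sum>t<r. c t * u t k))"
    by (simp add: cnj_vinner)
  also have "\<dots> = (\<Sum>t<r. cnj (c t) * vinner d (u t) y)"
    by (simp add: vinner_sum_right cnj_vinner)
  finally show ?thesis .
qed

lemma vinner_diff_left: "vinner d (\<lambda>k. x k - y k) z = vinner d x z - vinner d y z"
  by (simp add: vinner_def algebra_simps sum_subtractf)
lemma vinner_diff_right: "vinner d z (\<lambda>k. x k - y k) = vinner d z x - vinner d z y"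
  by (simp add: vinner_def algebra_simps sum_subtractf)
lemma vinner_add_left: "vinner d (\<lambda>k. x k + y k) z = vinner d x z + vinner d y z"
  by (simp add: vinner_def algebra_simps sum.distrib)
lemma vinner_add_right: "vinner d z (\<lambda>k. x k + y k) = vinner d z x + vinner d z y"
  by (simp add: vinner_def algebra_simps sum.distrib)
lemma vinner_scale_left: "vinner d (\<lambda>k. c * x k) z = cnj c * vinner d x z"
  by (simp add: vinner_def algebra_simps sum_distrib_left)
lemma vinner_scale_right: "vinner d z (\<lambda>k. c * x k) = c * vinner d z x"
  by (simp add: vinner_def algebra_simps sum_distrib_left)

lemma vinner_ket_right: "b < d \<Longrightarrow> vinner d z (ket b) = cnj (z b)"
  by (simp add: vinner_def ket_def if_distrib cong: if_cong)

lemma vnorm2_add_real_scale: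
  "vnorm2 d (\<lambda>k. x k + complex_of_real t * y k) = vnorm2 d x + 2 * t * Re (vinner d x y) + t\<^sup>2 * vnorm2 d y"
proof -
  have "vinner d x y + vinner d y x = of_real (2 * Re (vinner d x y))"
    by (metis complex_add_cnj cnj_vinner)
  then have "of_real t * vinner d x y + of_real t * vinner d y x = of_real t * of_real (2 * Re (vinner d x y))"
    by (metis distrib_left)
  then have "complex_of_real (vnorm2 d (\<lambda>k. x k + complex_of_real t * y k))
      = of_real (vnorm2 d x + 2 * t * Re (vinner d x y) + t\<^sup>2 * vnorm2 d y)"
    unfolding vinner_self[symmetric]
    by (simp add: vinner_add_left vinner_add_right vinner_scale_left vinner_scale_right
        vinner_self power2_eq_square algebra_simps)
  then show ?thesis using of_real_eq_iff by blast
qed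

lemma orthonormal_fam_vinner:
  "orthonormal_fam d r u \<longleftrightarrow> (\<forall>s<r. \<forall>t<r. vinner d (u s) (u t) = (if s = t then 1 else 0))"
  by (simp add: orthonormal_fam_def vinner_def)

lemma orthonormal_famD: "orthonormal_fam d r u \<Longrightarrow> s < r \<Longrightarrow> t < r \<Longrightarrow>
   vinner d (u s) (u t) = (if s = t then 1 else 0)"
  by (simp add: orthonormal_fam_vinner)

lemma orthonormal_fam_ket: "r \<le> d \<Longrightarrow> orthonormal_fam d r ket"
  by (auto simp: orthonormal_fam_vinner vinner_ket_right; simp add: ket_def)

lemma orthonormal_fam_extend:
  assumes "orthonormal_fam d k w" "vnorm2 d z = 1" "\<forall>s<k. vinner d (w s) z = 0"
  shows "orthonormal_fam d (Suc k) (w(k := z))"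
  using assms unfolding orthonormal_fam_vinner less_Suc_eq
  by (auto simp: vinner_self vinner_eq_0_commute)

lemma vinner_orthonormal_expansion:
  assumes "orthonormal_fam d r u" "s < r"
  shows "vinner d (u s) (\<lambda>k. \<Sum>t<r. c t * u t k) = c s"
proof -
  have "vinner d (u s) (\<lambda>k. \<Sum>t<r. c t * u t k) = (\<Sum>t\<in>{..<r}. if t = s then c t else 0)"
    unfolding vinner_sum_right by (intro sum.cong) (auto simp: orthonormal_famD[OF assms(1) assms(2)])
  with assms(2) show ?thesis by simp
qed

lemma vinner_projection_residual:
  assumes "orthonormal_fam d r u" "s < r"
  shows "vinner d (u s) (\<lambda>k. x k - (\<Sum>t<r. vinner d (u t) x * u t k)) = 0"
  by (simp add: vinner_diff_right vinner_orthonormal_expansion[OF assms])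

lemma bessel_inequality:
  assumes on: "orthonormal_fam d r u"
  shows "(\<Sum>t<r. (cmod (vinner d (u t) x))\<^sup>2) \<le> vnorm2 d x"
proof -
  define c where "c t = vinner d (u t) x" for t
  define y where "y k = (\<Sum>t<r. c t * u t k)" for k
  have cc: "(\<Sum>t<r. cnj (c t) * c t) = complex_of_real (\<Sum>t<r. (cmod (c t))\<^sup>2)"
    by (simp add: cnj_mult_self)
  have yx: "vinner d y x = (\<Sum>t<r. cnj (c t) * c t)"
    unfolding y_def vinner_sum_left c_def ..
  have xy: "vinner d x y = (\<Sum>t<r. cnj (c t) * c t)"
    using arg_cong[OF yx, of cnj] by (simp add: cnj_vinner mult.commute)
  have "vinner d y y = (\<Sum>t<r. cnj (c t) * vinner d (u t) y)"
    unfolding y_def by (rule vinner_sum_left)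
  also have "\<dots> = (\<Sum>t<r. cnj (c t) * c t)"
    using vinner_orthonormal_expansion[OF on] unfolding y_def by simp
  finally have yy: "vinner d y y = (\<Sum>t<r. cnj (c t) * c t)" .
  have "complex_of_real (vnorm2 d (\<lambda>k. x k - y k))
      = vinner d x x - vinner d x y - (vinner d y x - vinner d y y)"
    by (simp add: vinner_self[symmetric] vinner_diff_left vinner_diff_right)
  also have "\<dots> = complex_of_real (vnorm2 d x - (\<Sum>t<r. (cmod (c t))\<^sup>2))"
    by (simp only: xy yx yy cc vinner_self[of d x] of_real_diff) simp
  finally have "vnorm2 d (\<lambda>k. x k - y k) = vnorm2 d x - (\<Sum>t<r. (cmod (c t))\<^sup>2)"
    using of_real_eq_iff by blast
  with vnorm2_nonneg[of d "\<lambda>k. x k - y k"] show ?thesis unfolding c_def by linarith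
qed

lemma orthonormal_fam_le_dim:
  assumes on: "orthonormal_fam d r u"
  shows "r \<le> d"
proof -
  have "vnorm2 d (u t) = 1" if "t < r" for t
    using orthonormal_famD[OF on that that] of_real_eq_1_iff by (fastforce simp: vinner_self)
  then have "real r = (\<Sum>t<r. vnorm2 d (u t))" by simp
  also have "\<dots> = (\<Sum>k<d. \<Sum>t<r. (cmod (u t k))\<^sup>2)"
    unfolding vnorm2_def by (rule sum.swap)
  also have "\<dots> \<le> (\<Sum>k<d. 1)"
  proof (rule sum_mono)
    fix k assume k: "k \<in> {..<d}"
    have "complex_of_real (vnorm2 d (ket k)) = 1"
      unfolding vinner_self[symmetric] vinner_ket_right[OF k[simplified]] by (simp add: ket_def)
    then have "vnorm2 d (ket k) = 1" using of_real_eq_1_iff by blast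
    then show "(\<Sum>t<r. (cmod (u t k))\<^sup>2) \<le> 1"
      using bessel_inequality[OF on, of "ket k"] k by (simp add: vinner_ket_right)
  qed
  finally show ?thesis by simp
qed

text \<open>Rescaled by \<open>1/\<surd>N\<close>, the vectors would form an orthonormal family of \<open>n > r\<close> vectors.\<close>

lemma orthogonal_equal_norm_family_zero:
  assumes orth: "\<And>i j. i < n \<Longrightarrow> j < n \<Longrightarrow> i \<noteq> j \<Longrightarrow> vinner r (\<beta> i) (\<beta> j) = 0"
    and eq: "\<And>i. i < n \<Longrightarrow> vnorm2 r (\<beta> i) = vnorm2 r (\<beta> 0)"
    and "r < n" "i < n"
  shows "vnorm2 r (\<beta> i) = 0"
proof (rule ccontr)
  define N where "N = vnorm2 r (\<beta> 0)"
  assume "vnorm2 r (\<beta> i) \<noteq> 0"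
  then have N: "N > 0"
    using eq[OF \<open>i < n\<close>] vnorm2_nonneg[of r "\<beta> 0"] unfolding N_def by linarith
  define w where "w i k = complex_of_real (1 / sqrt N) * \<beta> i k" for i k
  have "orthonormal_fam r n w"
    unfolding orthonormal_fam_vinner
  proof (intro allI impI)
    fix i j assume i: "i < n" and j: "j < n"
    have "complex_of_real (1 / sqrt N) * complex_of_real (1 / sqrt N) = complex_of_real (1 / N)"
      using N by (simp flip: of_real_mult)
    then have "vinner r (w i) (w j) = complex_of_real (1 / N) * vinner r (\<beta> i) (\<beta> j)"
      unfolding w_def vinner_scale_left vinner_scale_right by (simp add: mult.assoc[symmetric])
    then show "vinner r (w i) (w j) = (if i = j then 1 else 0)"
      using N orth[OF i j] eq[OF i] eq[OF j] by (simp add: vinner_self N_def)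
  qed
  with \<open>r < n\<close> show False
    using orthonormal_fam_le_dim by fastforce
qed

section \<open>Existence of a Schmidt decomposition\<close>

definition mat_vec :: "nat \<Rightarrow> cmat \<Rightarrow> cvec \<Rightarrow> cvec" where
  "mat_vec dB Phi x = (\<lambda>a. \<Sum>b<dB. Phi a b * x b)"

definition orth_compl :: "nat \<Rightarrow> nat \<Rightarrow> (nat \<Rightarrow> cvec) \<Rightarrow> cvec set" where
  "orth_compl d k w = {x. \<forall>s<k. vinner d (w s) x = 0}"

lemma mat_vec_add_scale:
  "mat_vec dB Phi (\<lambda>k. x k + c * y k) = (\<lambda>a. mat_vec dB Phi x a + c * mat_vec dB Phi y a)"
  by (simp add: mat_vec_def algebra_simps sum.distrib sum_distrib_left)

lemma mat_vec_scale: "mat_vec dB Phi (\<lambda>k. c * y k) = (\<lambda>a. c * mat_vec dB Phi y a)"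
  by (simp add: mat_vec_def algebra_simps sum_distrib_left)

lemma mat_vec_diff: "mat_vec dB Phi (\<lambda>k. x k - y k) a = mat_vec dB Phi x a - mat_vec dB Phi y a"
  by (simp add: mat_vec_def algebra_simps sum_subtractf)

lemma mat_vec_sum:
  "mat_vec dB Phi (\<lambda>k. \<Sum>s<r. c s * w s k) a = (\<Sum>s<r. c s * mat_vec dB Phi (w s) a)"
proof -
  have "mat_vec dB Phi (\<lambda>k. \<Sum>s<r. c s * w s k) a = (\<Sum>b<dB. \<Sum>s<r. c s * (Phi a b * w s b))"
    by (simp add: mat_vec_def sum_distrib_left mult_ac)
  also have "\<dots> = (\<Sum>s<r. \<Sum>b<dB. c s * (Phi a b * w s b))" by (rule sum.swap)
  finally show ?thesis by (simp add: mat_vec_def sum_distrib_left)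
qed

lemma mat_vec_ket: "b < dB \<Longrightarrow> mat_vec dB Phi (ket b) a = Phi a b"
  by (simp add: mat_vec_def ket_def if_distrib cong: if_cong)

lemma orth_compl_add_scale:
  "x \<in> orth_compl d k w \<Longrightarrow> y \<in> orth_compl d k w \<Longrightarrow> (\<lambda>j. x j + c * y j) \<in> orth_compl d k w"
  by (simp add: orth_compl_def vinner_add_right vinner_scale_right)

lemma orth_compl_scale: "x \<in> orth_compl d k w \<Longrightarrow> (\<lambda>j. c * x j) \<in> orth_compl d k w"
  by (simp add: orth_compl_def vinner_scale_right)

text \<open>The \<open>w s\<close> are right singular vectors of \<open>Phi\<close> with nonzero singular values. Such a
  system is extended by a maximiser of \<open>\<parallel>Phi x\<parallel>\<^sup>2\<close> on the unit sphere of its orthogonal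
  complement until \<open>Phi\<close> vanishes on that complement.\<close>

definition singular_system :: "nat \<Rightarrow> nat \<Rightarrow> cmat \<Rightarrow> nat \<Rightarrow> (nat \<Rightarrow> cvec) \<Rightarrow> bool" where
  "singular_system dA dB Phi k w \<longleftrightarrow> orthonormal_fam dB k w \<and>
     (\<forall>s<k. \<forall>x. vinner dB (w s) x = 0 \<longrightarrow>
        vinner dA (mat_vec dB Phi (w s)) (mat_vec dB Phi x) = 0) \<and>
     (\<forall>s<k. vnorm2 dA (mat_vec dB Phi (w s)) > 0)"

lemma singular_system_orthonormal_images:
  assumes sys: "singular_system dA dB Phi k w"
  defines "sg \<equiv> \<lambda>s. sqrt (vnorm2 dA (mat_vec dB Phi (w s)))"
  shows "orthonormal_fam dA k (\<lambda>s a. complex_of_real (1 / sg s) * mat_vec dB Phi (w s) a)"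
  unfolding orthonormal_fam_vinner
proof (intro allI impI)
  fix s t assume s: "s < k" and t: "t < k"
  have pos: "vnorm2 dA (mat_vec dB Phi (w s)) > 0" and sg: "sg s > 0"
    using sys s unfolding singular_system_def sg_def by auto
  have "vinner dA (\<lambda>a. complex_of_real (1 / sg s) * mat_vec dB Phi (w s) a)
      (\<lambda>a. complex_of_real (1 / sg t) * mat_vec dB Phi (w t) a)
      = complex_of_real (1 / sg s) * complex_of_real (1 / sg t) *
        vinner dA (mat_vec dB Phi (w s)) (mat_vec dB Phi (w t))"
    unfolding vinner_scale_left vinner_scale_right by simp
  also have "\<dots> = (if s = t then 1 else 0)"
  proof (cases "s = t")
    case True
    have "vinner dA (mat_vec dB Phi (w s)) (mat_vec dB Phi (w s)) = complex_of_real (sg s * sg s)"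
      using pos by (simp add: vinner_self sg_def)
    with True sg show ?thesis by (simp flip: of_real_mult)
  next
    case False
    then show ?thesis
      using sys s t orthonormal_famD[of dB k w s t] unfolding singular_system_def by simp
  qed
  finally show "vinner dA (\<lambda>a. complex_of_real (1 / sg s) * mat_vec dB Phi (w s) a)
      (\<lambda>a. complex_of_real (1 / sg t) * mat_vec dB Phi (w t) a) = (if s = t then 1 else 0)" .
qed

lemma schmidt_decomp_of_singular_system:
  assumes sys: "singular_system dA dB Phi k w"
    and ker: "\<And>x a. x \<in> orth_compl dB k w \<Longrightarrow> a < dA \<Longrightarrow> mat_vec dB Phi x a = 0"
  shows "schmidt_decomp dA dB Phi k"
proof -
  have on: "orthonormal_fam dB k w"
    using sys unfolding singular_system_def by auto
  define sg where "sg s = sqrt (vnorm2 dA (mat_vec dB Phi (w s)))" for s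
  define u where "u s a = complex_of_real (1 / sg s) * mat_vec dB Phi (w s) a" for s a
  define v where "v s b = cnj (w s b)" for s b
  have sg: "s < k \<Longrightarrow> sg s > 0" for s
    using sys unfolding singular_system_def sg_def by simp
  have "orthonormal_fam dA k u"
    using singular_system_orthonormal_images[OF sys] unfolding u_def sg_def .
  moreover have "orthonormal_fam dB k v"
    using on unfolding orthonormal_fam_def v_def by (simp add: mult.commute)
  moreover have "Phi a b = (\<Sum>t<k. complex_of_real (sg t) * u t a * v t b)"
    if a: "a < dA" and b: "b < dB" for a b
  proof -
    define x where "x j = ket b j - (\<Sum>s<k. vinner dB (w s) (ket b) * w s j)" for j
    have "x \<in> orth_compl dB k w"
      unfolding orth_compl_def x_def using vinner_projection_residual[OF on] by blast
    then have "mat_vec dB Phi x a = 0" using ker a by blast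
    then have "Phi a b = (\<Sum>s<k. cnj (w s b) * mat_vec dB Phi (w s) a)"
      unfolding x_def mat_vec_diff mat_vec_sum using b by (simp add: mat_vec_ket vinner_ket_right)
    also have "\<dots> = (\<Sum>t<k. complex_of_real (sg t) * u t a * v t b)"
    proof (intro sum.cong refl)
      fix t assume "t \<in> {..<k}"
      then have "sg t > 0" using sg by simp
      then have h: "complex_of_real (sg t) * complex_of_real (1 / sg t) = 1"
        by (simp flip: of_real_mult)
      show "cnj (w t b) * mat_vec dB Phi (w t) a = complex_of_real (sg t) * u t a * v t b"
        unfolding u_def v_def mult.assoc[symmetric] h by (simp add: mult.commute)
    qed
    finally show ?thesis .
  qed
  ultimately show ?thesis
    unfolding schmidt_decomp_def using sg by blast
qed

lemma convergent_subseq_coordinates: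
  fixes X :: "nat \<Rightarrow> nat \<Rightarrow> complex"
  assumes bd: "\<And>n j. j < d \<Longrightarrow> cmod (X n j) \<le> B"
  shows "\<exists>\<sigma>. strict_mono \<sigma> \<and> (\<forall>j<d. convergent (\<lambda>n. X (\<sigma> n) j))"
  using bd
proof (induction d)
  case 0
  show ?case by (rule exI[of _ id]) (simp add: strict_mono_def)
next
  case (Suc d)
  then obtain \<sigma> where sm: "strict_mono \<sigma>" and cv: "\<forall>j<d. convergent (\<lambda>n. X (\<sigma> n) j)"
    by (metis less_SucI)
  have "bounded (range (\<lambda>n. X (\<sigma> n) d))"
    unfolding bounded_iff using Suc.prems by blast
  then obtain l \<tau> where st: "strict_mono \<tau>" and lim: "((\<lambda>n. X (\<sigma> n) d) \<circ> \<tau>) \<longlonglongrightarrow> l"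
    using bounded_imp_convergent_subsequence by blast
  have "convergent (\<lambda>n. X (\<sigma> (\<tau> n)) j)" if "j < Suc d" for j
  proof (cases "j = d")
    case True
    with lim show ?thesis unfolding convergent_def by (auto simp: o_def)
  next
    case False
    with that cv obtain L where "(\<lambda>n. X (\<sigma> n) j) \<longlonglongrightarrow> L"
      unfolding convergent_def by (metis less_SucE)
    from LIMSEQ_subseq_LIMSEQ[OF this st] show ?thesis
      unfolding convergent_def by (auto simp: o_def)
  qed
  with strict_mono_o[OF sm st] show ?case by (auto simp: o_def)
qed

lemma cmod_le_1_of_vnorm2_1: "vnorm2 d x = 1 \<Longrightarrow> j < d \<Longrightarrow> cmod (x j) \<le> 1"
  using member_le_sum[of j "{..<d}" "\<lambda>j. (cmod (x j))\<^sup>2"]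
  by (simp add: vnorm2_def power_le_one_iff)

lemma vnorm2_mat_vec_le:
  assumes "\<And>j. j < dB \<Longrightarrow> cmod (x j) \<le> 1"
  shows "vnorm2 dA (mat_vec dB Phi x) \<le> (\<Sum>a<dA. (\<Sum>b<dB. cmod (Phi a b))\<^sup>2)"
  unfolding vnorm2_def
proof (intro sum_mono power_mono)
  fix a
  have "cmod (mat_vec dB Phi x a) \<le> (\<Sum>b<dB. cmod (Phi a b * x b))"
    unfolding mat_vec_def by (rule norm_sum)
  also have "\<dots> \<le> (\<Sum>b<dB. cmod (Phi a b))"
    using assms by (intro sum_mono) (simp add: norm_mult mult_left_le)
  finally show "cmod (mat_vec dB Phi x a) \<le> (\<Sum>b<dB. cmod (Phi a b))" .
qed simp

lemma maximizing_sequence_exists: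
  fixes F :: "'a \<Rightarrow> real"
  assumes "T \<noteq> {}" "bdd_above (F ` T)"
  obtains X where "\<And>n. X n \<in> T" "(\<lambda>n. F (X n)) \<longlonglongrightarrow> Sup (F ` T)"
proof -
  define M where "M = Sup (F ` T)"
  have "\<exists>x\<in>T. M - inverse (real (Suc n)) < F x" for n
    using less_cSup_iff[OF _ assms(2), of "M - inverse (real (Suc n))"] assms(1) unfolding M_def by simp
  then obtain X where XT: "\<And>n. X n \<in> T" and Xlow: "\<And>n. M - inverse (real (Suc n)) < F (X n)"
    by metis
  have "(\<lambda>n. F (X n)) \<longlonglongrightarrow> M"
  proof (rule tendsto_sandwich[of "\<lambda>n. M - inverse (real (Suc n))" _ _ "\<lambda>n. M"])
    show "(\<lambda>n. M - inverse (real (Suc n))) \<longlonglongrightarrow> M"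
      using tendsto_diff[OF tendsto_const LIMSEQ_inverse_real_of_nat] by simp
    show "\<forall>\<^sub>F n in sequentially. M - inverse (real (Suc n)) \<le> F (X n)"
      using Xlow by (simp add: less_imp_le)
    have "F (X n) \<le> M" for n
      using XT assms(2) unfolding M_def by (auto intro: cSup_upper)
    then show "\<forall>\<^sub>F n in sequentially. F (X n) \<le> M" by simp
  qed simp
  with XT that show ?thesis unfolding M_def by blast
qed

text \<open>By compactness of the unit sphere of the orthogonal complement, \<open>\<parallel>Phi x\<parallel>\<^sup>2\<close>
  attains its supremum there.\<close>

lemma image_norm2_attains_sup:
  assumes "x0 \<in> orth_compl dB k w \<inter> {x. vnorm2 dB x = 1}"
  obtains z where "z \<in> orth_compl dB k w \<inter> {x. vnorm2 dB x = 1}"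
    "\<And>x. x \<in> orth_compl dB k w \<inter> {x. vnorm2 dB x = 1} \<Longrightarrow>
       vnorm2 dA (mat_vec dB Phi x) \<le> vnorm2 dA (mat_vec dB Phi z)"
proof -
  define T where "T = orth_compl dB k w \<inter> {x. vnorm2 dB x = 1}"
  define F where "F x = vnorm2 dA (mat_vec dB Phi x)" for x
  have Tbd: "cmod (x j) \<le> 1" if "x \<in> T" "j < dB" for x j
    using that cmod_le_1_of_vnorm2_1 unfolding T_def by blast
  have "F x \<le> (\<Sum>a<dA. (\<Sum>b<dB. cmod (Phi a b))\<^sup>2)" if "x \<in> T" for x
    unfolding F_def using Tbd[OF that] by (rule vnorm2_mat_vec_le)
  then have bdd: "bdd_above (F ` T)" by (meson bdd_above.I2)
  define M where "M = Sup (F ` T)"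
  have Mup: "x \<in> T \<Longrightarrow> F x \<le> M" for x
    unfolding M_def using bdd by (auto intro: cSup_upper)
  obtain X where XT: "\<And>n. X n \<in> T" and FX: "(\<lambda>n. F (X n)) \<longlonglongrightarrow> M"
    using maximizing_sequence_exists[OF _ bdd] assms unfolding M_def T_def by blast
  obtain \<sigma> where sm: "strict_mono \<sigma>" and cv: "\<forall>j<dB. convergent (\<lambda>n. X (\<sigma> n) j)"
    using convergent_subseq_coordinates[of dB X 1] Tbd XT by blast
  define z where "z j = lim (\<lambda>n. X (\<sigma> n) j)" for j
  have conv: "j < dB \<Longrightarrow> (\<lambda>n. X (\<sigma> n) j) \<longlonglongrightarrow> z j" for j
    using cv by (simp add: z_def convergent_LIMSEQ_iff)
  have "(\<lambda>n. vnorm2 dB (X (\<sigma> n))) \<longlonglongrightarrow> vnorm2 dB z"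
    unfolding vnorm2_def by (intro tendsto_sum tendsto_power tendsto_norm conv) simp
  moreover have "(\<lambda>n. vnorm2 dB (X (\<sigma> n))) = (\<lambda>n. 1)" using XT by (simp add: T_def)
  ultimately have "vnorm2 dB z = 1" using LIMSEQ_unique tendsto_const by metis
  moreover have "vinner dB (w s) z = 0" if "s < k" for s
  proof -
    have "(\<lambda>n. vinner dB (w s) (X (\<sigma> n))) \<longlonglongrightarrow> vinner dB (w s) z"
      unfolding vinner_def by (intro tendsto_sum tendsto_mult tendsto_const conv) simp
    moreover have "(\<lambda>n. vinner dB (w s) (X (\<sigma> n))) = (\<lambda>n. 0)"
      using XT that by (simp add: T_def orth_compl_def)
    ultimately show ?thesis using LIMSEQ_unique tendsto_const by metis
  qed
  ultimately have zT: "z \<in> T" by (simp add: T_def orth_compl_def)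
  have "(\<lambda>n. F (X (\<sigma> n))) \<longlonglongrightarrow> F z"
    unfolding F_def vnorm2_def mat_vec_def
    by (intro tendsto_sum tendsto_power tendsto_norm tendsto_mult tendsto_const conv) simp
  moreover have "(\<lambda>n. F (X (\<sigma> n))) \<longlonglongrightarrow> M"
    using LIMSEQ_subseq_LIMSEQ[OF FX sm] by (simp add: o_def)
  ultimately have "F z = M" using LIMSEQ_unique by blast
  with zT Mup that show ?thesis unfolding T_def F_def by auto
qed

lemma image_norm2_normalize:
  assumes "vnorm2 dB x > 0"
  defines "x' \<equiv> (\<lambda>j. complex_of_real (1 / sqrt (vnorm2 dB x)) * x j)"
  shows "vnorm2 dB x' = 1"
    and "vnorm2 dA (mat_vec dB Phi x') = vnorm2 dA (mat_vec dB Phi x) / vnorm2 dB x"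
proof -
  have c: "(cmod (complex_of_real (1 / sqrt (vnorm2 dB x))))\<^sup>2 = 1 / vnorm2 dB x"
    using assms(1) by (simp add: norm_divide power_divide)
  show "vnorm2 dB x' = 1" using assms(1) unfolding x'_def vnorm2_scale c by simp
  show "vnorm2 dA (mat_vec dB Phi x') = vnorm2 dA (mat_vec dB Phi x) / vnorm2 dB x"
    unfolding x'_def mat_vec_scale vnorm2_scale c by simp
qed

lemma rayleigh_maximizer_exists:
  assumes x0: "x0 \<in> orth_compl dB k w" and a0: "a0 < dA" and nz: "mat_vec dB Phi x0 a0 \<noteq> 0"
  obtains z where "z \<in> orth_compl dB k w" "vnorm2 dB z = 1" "vnorm2 dA (mat_vec dB Phi z) > 0"
    "\<And>x. x \<in> orth_compl dB k w \<Longrightarrow>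
       vnorm2 dA (mat_vec dB Phi x) \<le> vnorm2 dA (mat_vec dB Phi z) * vnorm2 dB x"
proof -
  let ?F = "\<lambda>x. vnorm2 dA (mat_vec dB Phi x)"
  let ?unit = "\<lambda>x. (\<lambda>j. complex_of_real (1 / sqrt (vnorm2 dB x)) * x j)"
  have "?F x0 \<noteq> 0" using nz a0 vnorm2_eq_0_iff by blast
  then have F0: "?F x0 > 0" using vnorm2_nonneg[of dA] by (metis less_eq_real_def)
  have "vnorm2 dB x0 \<noteq> 0"
  proof
    assume "vnorm2 dB x0 = 0"
    then have "\<forall>b<dB. x0 b = 0" by (simp add: vnorm2_eq_0_iff)
    then have "mat_vec dB Phi x0 a0 = 0" by (simp add: mat_vec_def)
    with nz show False by simp
  qed
  then have n0: "vnorm2 dB x0 > 0" using vnorm2_nonneg[of dB x0] by linarith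
  have "?unit x0 \<in> orth_compl dB k w" by (rule orth_compl_scale[OF x0])
  moreover have "vnorm2 dB (?unit x0) = 1" by (rule image_norm2_normalize(1)[OF n0])
  ultimately have "?unit x0 \<in> orth_compl dB k w \<inter> {x. vnorm2 dB x = 1}" by blast
  then obtain z where zT: "z \<in> orth_compl dB k w \<inter> {x. vnorm2 dB x = 1}"
    and zmax: "\<And>x. x \<in> orth_compl dB k w \<inter> {x. vnorm2 dB x = 1} \<Longrightarrow> ?F x \<le> ?F z"
    by (rule image_norm2_attains_sup[where dA = dA and Phi = Phi]) blast
  have bound: "?F x \<le> ?F z * vnorm2 dB x" if x: "x \<in> orth_compl dB k w" for x
  proof (cases "vnorm2 dB x > 0")
    case True
    have "?unit x \<in> orth_compl dB k w \<inter> {x. vnorm2 dB x = 1}"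
      using orth_compl_scale[OF x] image_norm2_normalize(1)[OF True] by blast
    then have "?F (?unit x) \<le> ?F z" by (rule zmax)
    then have "?F x / vnorm2 dB x \<le> ?F z" unfolding image_norm2_normalize(2)[OF True] .
    then show ?thesis using True by (simp add: divide_le_eq mult.commute)
  next
    case False
    then have "\<forall>b<dB. x b = 0" using vnorm2_nonneg[of dB x] vnorm2_eq_0_iff by force
    then show ?thesis by (simp add: mat_vec_def vnorm2_def)
  qed
  have "0 < ?F z * vnorm2 dB x0" using bound[OF x0] F0 by linarith
  then have "?F z > 0" using n0 by (simp add: zero_less_mult_iff)
  with zT bound that show ?thesis by blast
qed

lemma real_linear_coeff_eq_0:
  fixes a b :: real
  assumes "\<And>t. 2 * t * a + t\<^sup>2 * b \<le> 0"
  shows "a = 0"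
proof (rule ccontr)
  assume "a \<noteq> 0"
  define c where "c = \<bar>b\<bar> + 1"
  have c: "c > 0" "2 * c + b > 0" unfolding c_def by auto
  have "2 * (a / c) * a + (a / c)\<^sup>2 * b = a\<^sup>2 * (2 * c + b) / c\<^sup>2"
    using c by (simp add: field_simps power2_eq_square)
  also have "\<dots> > 0" using \<open>a \<noteq> 0\<close> c by simp
  finally show False using assms[of "a / c"] by linarith
qed

text \<open>First-order condition at a maximiser \<open>z\<close> of the Rayleigh quotient: perturbing \<open>z\<close> by
  \<open>t y\<close> and by \<open>t i y\<close> kills the real and the imaginary part of the cross term.\<close>

lemma rayleigh_maximizer_orthogonal:
  assumes z: "z \<in> orth_compl dB k w" "vnorm2 dB z = 1"
    and max: "\<And>x. x \<in> orth_compl dB k w \<Longrightarrow>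
       vnorm2 dA (mat_vec dB Phi x) \<le> vnorm2 dA (mat_vec dB Phi z) * vnorm2 dB x"
    and y: "y \<in> orth_compl dB k w" "vinner dB z y = 0"
  shows "vinner dA (mat_vec dB Phi z) (mat_vec dB Phi y) = 0"
proof -
  let ?M = "vnorm2 dA (mat_vec dB Phi z)"
  have re: "Re (vinner dA (mat_vec dB Phi z) (mat_vec dB Phi y')) = 0"
    if y': "y' \<in> orth_compl dB k w" "vinner dB z y' = 0" for y'
  proof (rule real_linear_coeff_eq_0)
    fix t :: real
    have "vnorm2 dA (mat_vec dB Phi (\<lambda>j. z j + complex_of_real t * y' j))
        \<le> ?M * vnorm2 dB (\<lambda>j. z j + complex_of_real t * y' j)"
      using max orth_compl_add_scale[OF z(1) y'(1)] by blast
    then show "2 * t * Re (vinner dA (mat_vec dB Phi z) (mat_vec dB Phi y'))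
        + t\<^sup>2 * (vnorm2 dA (mat_vec dB Phi y') - ?M * vnorm2 dB y') \<le> 0"
      using z(2) y'(2) by (simp add: mat_vec_add_scale vnorm2_add_real_scale algebra_simps)
  qed
  have "Re (vinner dA (mat_vec dB Phi z) (mat_vec dB Phi y)) = 0" by (rule re[OF y])
  moreover have "Re (vinner dA (mat_vec dB Phi z) (mat_vec dB Phi (\<lambda>j. \<i> * y j))) = 0"
    using y by (intro re orth_compl_scale) (simp_all add: vinner_scale_right)
  then have "Im (vinner dA (mat_vec dB Phi z) (mat_vec dB Phi y)) = 0"
    by (simp add: mat_vec_scale vinner_scale_right)
  ultimately show ?thesis by (simp add: complex_eq_iff)
qed

text \<open>Split \<open>x\<close> into its projection onto the \<open>w s\<close>, handled by the singular system, and the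
  residual in the orthogonal complement, handled by the first-order condition.\<close>

lemma singular_system_maximizer_orthogonal:
  assumes sys: "singular_system dA dB Phi k w"
    and z: "z \<in> orth_compl dB k w" "vnorm2 dB z = 1"
    and max: "\<And>x. x \<in> orth_compl dB k w \<Longrightarrow>
       vnorm2 dA (mat_vec dB Phi x) \<le> vnorm2 dA (mat_vec dB Phi z) * vnorm2 dB x"
    and zx: "vinner dB z x = 0"
  shows "vinner dA (mat_vec dB Phi z) (mat_vec dB Phi x) = 0"
proof -
  have on: "orthonormal_fam dB k w"
    and orth: "\<And>s x. s < k \<Longrightarrow> vinner dB (w s) x = 0 \<Longrightarrow>
        vinner dA (mat_vec dB Phi (w s)) (mat_vec dB Phi x) = 0"
    using sys unfolding singular_system_def by auto
  define c where "c s = vinner dB (w s) x" for s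
  define x' where "x' j = x j - (\<Sum>s<k. c s * w s j)" for j
  have x'_orth: "x' \<in> orth_compl dB k w"
    unfolding orth_compl_def x'_def c_def using vinner_projection_residual[OF on] by blast
  have "vinner dB z (w s) = 0" if "s < k" for s
    using z(1) that by (simp add: orth_compl_def vinner_eq_0_commute)
  then have "vinner dB z x' = 0"
    using zx by (simp add: x'_def[abs_def] vinner_diff_right vinner_sum_right)
  then have "vinner dA (mat_vec dB Phi z) (mat_vec dB Phi x') = 0"
    by (intro rayleigh_maximizer_orthogonal[OF z(1) z(2) _ x'_orth] max)
  moreover have "vinner dA (mat_vec dB Phi z) (mat_vec dB Phi (w s)) = 0" if "s < k" for s
    using orth[OF that] z(1) that by (simp add: orth_compl_def vinner_eq_0_commute)
  moreover have "mat_vec dB Phi x = (\<lambda>a. mat_vec dB Phi x' a + (\<Sum>s<k. c s * mat_vec dB Phi (w s) a))"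
    unfolding x'_def by (simp add: mat_vec_diff mat_vec_sum)
  ultimately show ?thesis by (simp add: vinner_add_right vinner_sum_right)
qed

lemma singular_system_extend:
  assumes sys: "singular_system dA dB Phi k w"
    and x0: "x0 \<in> orth_compl dB k w" and a0: "a0 < dA" and nz: "mat_vec dB Phi x0 a0 \<noteq> 0"
  shows "\<exists>z. singular_system dA dB Phi (Suc k) (w(k := z))"
proof -
  have on: "orthonormal_fam dB k w"
    and orth: "\<And>s x. s < k \<Longrightarrow> vinner dB (w s) x = 0 \<Longrightarrow>
        vinner dA (mat_vec dB Phi (w s)) (mat_vec dB Phi x) = 0"
    and pos: "\<And>s. s < k \<Longrightarrow> vnorm2 dA (mat_vec dB Phi (w s)) > 0"
    using sys unfolding singular_system_def by auto
  obtain z where z: "z \<in> orth_compl dB k w" "vnorm2 dB z = 1" "vnorm2 dA (mat_vec dB Phi z) > 0"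
    and max: "\<And>x. x \<in> orth_compl dB k w \<Longrightarrow>
       vnorm2 dA (mat_vec dB Phi x) \<le> vnorm2 dA (mat_vec dB Phi z) * vnorm2 dB x"
    using rayleigh_maximizer_exists[OF x0 a0 nz] by blast
  note orth_z = singular_system_maximizer_orthogonal[OF sys z(1,2) max]
  have "singular_system dA dB Phi (Suc k) (w(k := z))"
    unfolding singular_system_def
  proof (intro conjI allI impI)
    show "orthonormal_fam dB (Suc k) (w(k := z))"
      using orthonormal_fam_extend[OF on z(2)] z(1) by (simp add: orth_compl_def)
  next
    fix s x assume "s < Suc k" "vinner dB ((w(k := z)) s) x = 0"
    then show "vinner dA (mat_vec dB Phi ((w(k := z)) s)) (mat_vec dB Phi x) = 0"
      using orth orth_z by (cases "s = k") simp_all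
  next
    fix s assume "s < Suc k"
    then show "vnorm2 dA (mat_vec dB Phi ((w(k := z)) s)) > 0"
      using pos z(3) by (cases "s = k") simp_all
  qed
  then show ?thesis by blast
qed

theorem schmidt_decomp_exists: "\<exists>r. schmidt_decomp dA dB Phi r"
proof -
  have "\<exists>r. schmidt_decomp dA dB Phi r" if "singular_system dA dB Phi k w" for k w
    using that
  proof (induction "dB - k" arbitrary: k w rule: less_induct)
    case less
    show ?case
    proof (cases "\<forall>x\<in>orth_compl dB k w. \<forall>a<dA. mat_vec dB Phi x a = 0")
      case True
      then show ?thesis using schmidt_decomp_of_singular_system[OF less.prems] by blast
    next
      case False
      then obtain x0 a0 where "x0 \<in> orth_compl dB k w" "a0 < dA" "mat_vec dB Phi x0 a0 \<noteq> 0"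
        by blast
      from singular_system_extend[OF less.prems this] obtain z
        where sys': "singular_system dA dB Phi (Suc k) (w(k := z))" by blast
      then have "Suc k \<le> dB" using orthonormal_fam_le_dim unfolding singular_system_def by blast
      then show ?thesis using less.hyps[OF _ sys'] by simp
    qed
  qed
  moreover have "singular_system dA dB Phi 0 w" for w
    by (simp add: singular_system_def orthonormal_fam_def)
  ultimately show ?thesis by blast
qed

text \<open>Without the existence theorem the \<open>LEAST\<close> in \<open>schmidt_rank\<close> could be an
  arbitrary number.\<close>

corollary schmidt_decomp_schmidt_rank: "schmidt_decomp dA dB Phi (schmidt_rank dA dB Phi)"
  unfolding schmidt_rank_def using schmidt_decomp_exists by (rule LeastI_ex)

section \<open>One-way LOCC needs a resource of Schmidt rank three\<close>

lemma sum_mult_blocks: "(\<Sum>b<n * q. f b) = (\<Sum>j<n. \<Sum>l<q. f (j * q + l))" for n q :: nat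
proof -
  have "sum f {j * q..<j * q + q} = (\<Sum>l<q. f (j * q + l))" for j
    using sum.atLeastLessThan_shift_0[of f "j * q" "j * q + q"] by (simp add: atLeast0LessThan)
  then show ?thesis using sum.nat_group[of f q n] by simp
qed

lemma kraus_vinner:
  assumes "kraus d d' Ks"
  shows "(\<Sum>m<length Ks. vinner d' (mat_vec d (Ks ! m) x) (mat_vec d (Ks ! m) y)) = vinner d x y"
proof -
  let ?g = "\<lambda>m r c c'. (cnj (x c) * y c') * (cnj ((Ks ! m) r c) * (Ks ! m) r c')"
  have "(\<Sum>m<length Ks. vinner d' (mat_vec d (Ks ! m) x) (mat_vec d (Ks ! m) y))
      = (\<Sum>m<length Ks. \<Sum>r<d'. \<Sum>c<d. \<Sum>c'<d. ?g m r c c')"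
    by (simp add: vinner_def mat_vec_def sum_distrib_left sum_distrib_right mult_ac)
  also have "\<dots> = (\<Sum>c<d. \<Sum>c'<d. \<Sum>m<length Ks. \<Sum>r<d'. ?g m r c c')"
    by (subst sum.swap, subst (2) sum.swap, subst (3) sum.swap, subst (2) sum.swap,
        subst (3) sum.swap, subst (4) sum.swap, rule refl)
  also have "\<dots> = (\<Sum>c<d. \<Sum>c'<d. (cnj (x c) * y c') *
        (\<Sum>m<length Ks. \<Sum>r<d'. cnj ((Ks ! m) r c) * (Ks ! m) r c'))"
    by (simp add: sum_distrib_left)
  also have "\<dots> = (\<Sum>c<d. \<Sum>c'\<in>{..<d}. if c' = c then cnj (x c) * y c' else 0)"
    using assms unfolding kraus_def by (intro sum.cong refl) auto
  finally show ?thesis by (simp add: vinner_def)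
qed

text \<open>Completeness of Bob's measurement turns the vanishing of all but one state in each
  branch into orthogonality.\<close>

lemma identified_by_bob_imp_orthogonal:
  assumes kr: "kraus dB dB' Ls"
    and idf: "\<forall>n<length Ls. identified dA dB' (map (bob_op dB (Ls ! n)) S)"
    and "k < length S" "l < length S" "k \<noteq> l" "a < dA" "a' < dA"
  shows "vinner dB ((S ! k) a) ((S ! l) a') = 0"
proof -
  have "mat_vec dB (Ls ! m) ((S ! k) a) = (\<lambda>r. bob_op dB (Ls ! m) (S ! k) a r)" for m k a
    by (simp add: mat_vec_def bob_op_def)
  moreover have "vinner dB' (\<lambda>r. bob_op dB (Ls ! m) (S ! k) a r)
      (\<lambda>r. bob_op dB (Ls ! m) (S ! l) a' r) = 0" if m: "m < length Ls" for m
  proof -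
    have "\<not> (nonzero_state dA dB' (bob_op dB (Ls ! m) (S ! k)) \<and>
        nonzero_state dA dB' (bob_op dB (Ls ! m) (S ! l)))"
      using idf m assms(3-5) unfolding identified_def by auto
    then show ?thesis using assms(6,7) unfolding nonzero_state_def vinner_def by auto
  qed
  ultimately show ?thesis using kraus_vinner[OF kr, symmetric] by simp
qed

text \<open>Bob's ancilla state when Alice's input is \<open>|i\<rangle>\<close> and her Kraus operator has row \<open>a\<close>.\<close>

definition ancilla_block :: "nat \<Rightarrow> cmat \<Rightarrow> cmat \<Rightarrow> nat \<Rightarrow> nat \<Rightarrow> cvec" where
  "ancilla_block p K Phi i a = (\<lambda>l. \<Sum>c<p. K a (i * p + c) * Phi c l)"

definition ancilla_state :: "nat \<Rightarrow> cmat \<Rightarrow> cmat \<Rightarrow> cvec \<Rightarrow> nat \<Rightarrow> cvec" where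
  "ancilla_state p K Phi x a = (\<lambda>l. \<Sum>i<3. x i * ancilla_block p K Phi i a l)"

lemma alice_op_tensor_anc:
  assumes "p > 0"
  shows "alice_op (3 * p) K (tensor_anc p q Phi xy) a b
    = snd xy (b div q) * ancilla_state p K Phi (fst xy) a (b mod q)"
proof -
  have "alice_op (3 * p) K (tensor_anc p q Phi xy) a b = (\<Sum>i<3. \<Sum>c<p.
      K a (i * p + c) * fst xy ((i * p + c) div p) * snd xy (b div q) * Phi ((i * p + c) mod p) (b mod q))"
    unfolding alice_op_def tensor_anc_def by (subst sum_mult_blocks) (simp add: mult.assoc)
  then show ?thesis using assms
    by (simp add: ancilla_state_def ancilla_block_def sum_distrib_left mult_ac)
qed

lemma vinner_alice_op_tensor_anc:
  assumes "p > 0" "q > 0"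
  shows "vinner (3 * q) (alice_op (3 * p) K (tensor_anc p q Phi xy) a)
      (alice_op (3 * p) K (tensor_anc p q Phi xy') a)
    = vinner 3 (snd xy) (snd xy') *
      vinner q (ancilla_state p K Phi (fst xy) a) (ancilla_state p K Phi (fst xy') a)"
  unfolding vinner_def alice_op_tensor_anc[OF assms(1)] sum_mult_blocks[where n = 3]
  using assms(2) by (simp add: sum_distrib_left sum_distrib_right mult_ac) (rule sum.swap)

lemma one_way_orthogonality:
  assumes "p > 0" "q > 0" and kr: "kraus (3 * q) dB2 Ls"
    and idf: "\<forall>n<length Ls. identified dA2 dB2
        (map (bob_op (3 * q) (Ls ! n) \<circ> alice_op (3 * p) K) (nine_with p q Phi))"
    and "k < 9" "l < 9" "k \<noteq> l" "a < dA2"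
  shows "vinner 3 (snd (nine_states ! k)) (snd (nine_states ! l)) *
    vinner q (ancilla_state p K Phi (fst (nine_states ! k)) a)
      (ancilla_state p K Phi (fst (nine_states ! l)) a) = 0"
proof -
  let ?S = "map (alice_op (3 * p) K) (nine_with p q Phi)"
  have len9: "length nine_states = 9" by (simp add: nine_states_def)
  then have len: "length ?S = 9" by (simp add: nine_with_def)
  have "\<forall>n<length Ls. identified dA2 dB2 (map (bob_op (3 * q) (Ls ! n)) ?S)"
    using idf by simp
  from identified_by_bob_imp_orthogonal[OF kr this] assms(5-8) len
  have "vinner (3 * q) ((?S ! k) a) ((?S ! l) a) = 0" by simp
  moreover have "?S ! j = alice_op (3 * p) K (tensor_anc p q Phi (nine_states ! j))"
    if "j < 9" for j
    using that len9 by (simp add: nine_with_def)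
  ultimately show ?thesis
    using assms(5,6) by (simp add: vinner_alice_op_tensor_anc[OF assms(1,2)])
qed

lemma vinner_plus_minus:
  "vinner d (\<lambda>l. c * (f l + g l)) (\<lambda>l. c * (f l - g l)) =
   cnj c * c * (vinner d f f - vinner d f g + vinner d g f - vinner d g g)"
  by (simp add: vinner_scale_left vinner_scale_right vinner_add_left vinner_diff_right algebra_simps)

definition inv_sqrt2 :: complex where
  "inv_sqrt2 = inverse (complex_of_real (sqrt 2))"

lemma inv_sqrt2_sq: "inv_sqrt2 * inv_sqrt2 = 1 / 2" "inv_sqrt2 * (inv_sqrt2 * z) = z / 2"
proof -
  have "complex_of_real (sqrt 2) * complex_of_real (sqrt 2) = 2"
    by (simp flip: of_real_mult)
  then show "inv_sqrt2 * inv_sqrt2 = 1 / 2" "inv_sqrt2 * (inv_sqrt2 * z) = z / 2"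
    by (simp_all add: inv_sqrt2_def field_simps)
qed

lemma cnj_inv_sqrt2: "cnj inv_sqrt2 = inv_sqrt2"
  by (simp add: inv_sqrt2_def)

lemma ket_plus_eq: "ket_plus a b j = (if j = a then inv_sqrt2 else 0) + (if j = b then inv_sqrt2 else 0)"
  by (simp add: ket_plus_def ket_def inv_sqrt2_def divide_inverse)

lemma ket_minus_eq: "ket_minus a b j = (if j = a then inv_sqrt2 else 0) - (if j = b then inv_sqrt2 else 0)"
  by (simp add: ket_minus_def ket_def inv_sqrt2_def divide_inverse)

lemma sum_ket_mult:
  assumes "i < n"
  shows "(\<Sum>k<n. ket i k * f k) = f i"
proof -
  have "(\<Sum>k<n. ket i k * f k) = (\<Sum>k\<in>{..<n}. if k = i then f k else 0)"
    by (intro sum.cong) (auto simp: ket_def)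
  with assms show ?thesis by simp
qed

lemma sum_ket_plus_minus_mult:
  assumes "i < n" "j < n"
  shows "(\<Sum>k<n. ket_plus i j k * f k) = inv_sqrt2 * (f i + f j)"
    and "(\<Sum>k<n. ket_minus i j k * f k) = inv_sqrt2 * (f i - f j)"
proof -
  have "(\<Sum>k<n. ket_plus i j k * f k) =
      inv_sqrt2 * ((\<Sum>k<n. ket i k * f k) + (\<Sum>k<n. ket j k * f k))"
    "(\<Sum>k<n. ket_minus i j k * f k) =
      inv_sqrt2 * ((\<Sum>k<n. ket i k * f k) - (\<Sum>k<n. ket j k * f k))"
    by (simp_all add: ket_plus_def ket_minus_def inv_sqrt2_def divide_inverse sum_distrib_left
        sum.distrib sum_subtractf algebra_simps)
  then show "(\<Sum>k<n. ket_plus i j k * f k) = inv_sqrt2 * (f i + f j)"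
    "(\<Sum>k<n. ket_minus i j k * f k) = inv_sqrt2 * (f i - f j)"
    using assms by (simp_all add: sum_ket_mult)
qed

lemma one_way_ancilla_blocks:
  assumes p: "p > 0" and q: "q > 0" and kr: "kraus (3 * q) dB2 Ls"
    and idf: "\<forall>n<length Ls. identified dA2 dB2
        (map (bob_op (3 * q) (Ls ! n) \<circ> alice_op (3 * p) K) (nine_with p q Phi))"
    and a: "a < dA2"
  defines "B \<equiv> \<lambda>i. ancilla_block p K Phi i a"
  shows "\<And>i j. i < 3 \<Longrightarrow> j < 3 \<Longrightarrow> i \<noteq> j \<Longrightarrow> vinner q (B i) (B j) = 0"
    and "\<And>i. i < 3 \<Longrightarrow> vnorm2 q (B i) = vnorm2 q (B 0)"
proof -
  have c: "inv_sqrt2 \<noteq> 0" "cnj inv_sqrt2 = inv_sqrt2" by (simp_all add: inv_sqrt2_def)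
  note orth = one_way_orthogonality[OF p q kr idf _ _ _ a]
  have st_ket: "ancilla_state p K Phi (ket i) a = B i" if "i < 3" for i
    using that unfolding ancilla_state_def B_def by (simp add: sum_ket_mult)
  have st: "ancilla_state p K Phi (ket_plus i j) a = (\<lambda>l. inv_sqrt2 * (B i l + B j l))"
    "ancilla_state p K Phi (ket_minus i j) a = (\<lambda>l. inv_sqrt2 * (B i l - B j l))"
    if "i < 3" "j < 3" for i j
    using that unfolding ancilla_state_def B_def
    by (simp_all add: sum_ket_plus_minus_mult)
  have overlaps: "vinner 3 (ket_plus 0 1) (ket 1) \<noteq> 0" "vinner 3 (ket_plus 0 1) (ket_plus 1 2) \<noteq> 0"
    "vinner 3 (ket 1) (ket_plus 1 2) \<noteq> 0" "vinner 3 (ket 2) (ket 2) = 1" "vinner 3 (ket 0) (ket 0) = 1"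
    by (simp_all add: vinner_def ket_plus_def ket_def eval_nat_numeral)
  \<comment> \<open>States 0, 4, 8 have pairwise non-orthogonal Bob factors and Alice factors
    \<open>|0\<rangle>, |1 + 2\<rangle>, |1\<rangle>\<close>; states 2, 3 and 6, 7 share Bob's factor and have Alice factors
    \<open>|0 \<plusminus> 1\<rangle>\<close> resp. \<open>|1 \<plusminus> 2\<rangle>\<close>.\<close>
  have g01: "vinner q (B 0) (B 1) = 0" using orth[of 0 8] overlaps(1) by (simp add: nine_states_def st_ket st)
  have g02: "vinner q (B 0) (B 2) = 0" using orth[of 0 4] overlaps(2) by (simp add: nine_states_def st_ket st)
  have g12: "vinner q (B 1) (B 2) = 0" using orth[of 8 4] overlaps(3) by (simp add: nine_states_def st_ket st)
  show orthogonal: "vinner q (B i) (B j) = 0" if "i < 3" "j < 3" "i \<noteq> j" for i j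
    using that g01 g02 g12 vinner_eq_0_commute[of q] by (auto simp: less_Suc_eq eval_nat_numeral)
  have "vinner q (\<lambda>l. inv_sqrt2 * (B 0 l + B 1 l)) (\<lambda>l. inv_sqrt2 * (B 0 l - B 1 l)) = 0"
    using orth[of 2 3] overlaps(4) by (simp add: nine_states_def st_ket st)
  then have "vinner q (B 0) (B 0) = vinner q (B 1) (B 1)"
    unfolding vinner_plus_minus using c orthogonal[of 0 1] orthogonal[of 1 0] by simp
  moreover have "vinner q (\<lambda>l. inv_sqrt2 * (B 1 l + B 2 l)) (\<lambda>l. inv_sqrt2 * (B 1 l - B 2 l)) = 0"
    using orth[of 6 7] overlaps(5) by (simp add: nine_states_def st_ket st)
  then have "vinner q (B 1) (B 1) = vinner q (B 2) (B 2)"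
    unfolding vinner_plus_minus using c orthogonal[of 1 2] orthogonal[of 2 1] by simp
  ultimately show "vnorm2 q (B i) = vnorm2 q (B 0)" if "i < 3" for i
    using that by (auto simp: vinner_self less_Suc_eq eval_nat_numeral)
qed

lemma vinner_orthonormal_combination:
  assumes "orthonormal_fam q r v"
  shows "vinner q (\<lambda>l. \<Sum>s<r. \<alpha> s * v s l) (\<lambda>l. \<Sum>s<r. \<beta> s * v s l) = vinner r \<alpha> \<beta>"
proof -
  have "vinner q (\<lambda>l. \<Sum>s<r. \<alpha> s * v s l) (\<lambda>l. \<Sum>s<r. \<beta> s * v s l) = (\<Sum>s<r. cnj (\<alpha> s) * \<beta> s)"
    unfolding vinner_sum_left by (intro sum.cong refl) (simp add: vinner_orthonormal_expansion[OF assms])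
  then show ?thesis by (simp add: vinner_def)
qed

lemma one_way_row_annihilates_schmidt_vectors:
  assumes p: "p > 0" and q: "q > 0"
    and dec: "\<forall>c<p. \<forall>l<q. Phi c l = (\<Sum>s<r. complex_of_real (lam s) * u s c * v s l)"
    and lam: "\<forall>s<r. lam s > 0" and ov: "orthonormal_fam q r v" and "r < 3"
    and kr: "kraus (3 * q) dB2 Ls"
    and idf: "\<forall>n<length Ls. identified dA2 dB2
        (map (bob_op (3 * q) (Ls ! n) \<circ> alice_op (3 * p) K) (nine_with p q Phi))"
    and a: "a < dA2" and t: "t < r"
  shows "(\<Sum>c<p. K a c * u t c) = 0"
proof -
  define \<beta> where "\<beta> i s = complex_of_real (lam s) * (\<Sum>c<p. K a (i * p + c) * u s c)" for i s
  have blocks: "ancilla_block p K Phi i a l = (\<Sum>s<r. \<beta> i s * v s l)" if "l < q" for i l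
  proof -
    have "ancilla_block p K Phi i a l
        = (\<Sum>c<p. \<Sum>s<r. complex_of_real (lam s) * (K a (i * p + c) * u s c) * v s l)"
      unfolding ancilla_block_def using dec that by (simp add: sum_distrib_left mult_ac)
    also have "\<dots> = (\<Sum>s<r. \<beta> i s * v s l)"
      by (subst sum.swap) (simp add: \<beta>_def sum_distrib_left sum_distrib_right mult_ac)
    finally show ?thesis .
  qed
  have gram: "vinner q (ancilla_block p K Phi i a) (ancilla_block p K Phi j a) = vinner r (\<beta> i) (\<beta> j)"
    for i j
    using vinner_cong[of q "ancilla_block p K Phi i a" "\<lambda>l. \<Sum>s<r. \<beta> i s * v s l"
        "ancilla_block p K Phi j a" "\<lambda>l. \<Sum>s<r. \<beta> j s * v s l"]
    by (simp add: blocks vinner_orthonormal_combination[OF ov])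
  note B = one_way_ancilla_blocks[OF p q kr idf a]
  have "vnorm2 r (\<beta> 0) = 0"
  proof (rule orthogonal_equal_norm_family_zero[where n = 3])
    show "vinner r (\<beta> i) (\<beta> j) = 0" if "i < 3" "j < 3" "i \<noteq> j" for i j
      using B(1)[OF that] by (simp add: gram)
    show "vnorm2 r (\<beta> i) = vnorm2 r (\<beta> 0)" if "i < 3" for i
      using B(2)[OF that] gram[of i i] gram[of 0 0] by (simp add: vinner_self)
  qed (use \<open>r < 3\<close> in auto)
  then have "\<beta> 0 t = 0" using t by (simp add: vnorm2_eq_0_iff)
  then show ?thesis using lam[rule_format, OF t] by (simp add: \<beta>_def)
qed

theorem one_way_schmidt_rank_ge_3:
  assumes p: "dA' > 0" and q: "dB' > 0" and unit: "unit_state dA' dB' Phi"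
    and ow: "one_way_locc_dist (3 * dA') (3 * dB') (nine_with dA' dB' Phi)"
  shows "schmidt_rank dA' dB' Phi \<ge> 3"
proof (rule ccontr)
  define r where "r = schmidt_rank dA' dB' Phi"
  assume "\<not> schmidt_rank dA' dB' Phi \<ge> 3"
  then have r3: "r < 3" by (simp add: r_def)
  obtain lam u v where lam: "\<forall>t<r. lam t > 0" and ou: "orthonormal_fam dA' r u"
    and ov: "orthonormal_fam dB' r v"
    and dec: "\<forall>a<dA'. \<forall>b<dB'. Phi a b = (\<Sum>t<r. complex_of_real (lam t) * u t a * v t b)"
    using schmidt_decomp_schmidt_rank[of dA' dB' Phi] unfolding schmidt_decomp_def r_def by blast
  have r0: "r > 0"
  proof (rule ccontr)
    assume "\<not> r > 0"
    then have "(\<Sum>a<dA'. \<Sum>b<dB'. (cmod (Phi a b))\<^sup>2) = 0" using dec by simp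
    with unit show False unfolding unit_state_def by simp
  qed
  from ow obtain dA2 Ks where kr: "kraus (3 * dA') dA2 Ks"
    and per: "\<forall>m<length Ks. \<exists>dB2 Ls. kraus (3 * dB') dB2 Ls \<and> (\<forall>n<length Ls. identified dA2 dB2
        (map (bob_op (3 * dB') (Ls ! n) \<circ> alice_op (3 * dA') (Ks ! m)) (nine_with dA' dB' Phi)))"
    unfolding one_way_locc_dist_def by blast
  define z where "z c = (if c < dA' then u 0 c else 0)" for c
  have "mat_vec (3 * dA') (Ks ! m) z a = 0" if m: "m < length Ks" and a: "a < dA2" for m a
  proof -
    obtain dB2 Ls where "kraus (3 * dB') dB2 Ls" and "\<forall>n<length Ls. identified dA2 dB2
        (map (bob_op (3 * dB') (Ls ! n) \<circ> alice_op (3 * dA') (Ks ! m)) (nine_with dA' dB' Phi))"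
      using per m by blast
    then have "(\<Sum>c<dA'. (Ks ! m) a c * u 0 c) = 0"
      by (rule one_way_row_annihilates_schmidt_vectors[OF p q dec lam ov r3 _ _ a r0])
    moreover have "mat_vec (3 * dA') (Ks ! m) z a = (\<Sum>c<dA'. (Ks ! m) a c * u 0 c)"
      unfolding mat_vec_def z_def by (rule sum.mono_neutral_cong_right) auto
    ultimately show ?thesis by simp
  qed
  then have "vinner (3 * dA') z z = 0"
    using kraus_vinner[OF kr, of z z] by (simp add: vinner_def)
  moreover have "vinner (3 * dA') z z = vinner dA' (u 0) (u 0)"
    unfolding vinner_def z_def by (rule sum.mono_neutral_cong_right) auto
  ultimately show False using orthonormal_famD[OF ou r0 r0] by simp
qed

section \<open>Maximally entangled resources\<close>

definition max_entangled :: "nat \<Rightarrow> cmat" where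
  "max_entangled d k l = (if k = l \<and> k < d then 1 / complex_of_real (sqrt (real d)) else 0)"

lemma unit_state_max_entangled: "d > 0 \<Longrightarrow> unit_state d d (max_entangled d)"
proof -
  assume "d > 0"
  have "(\<Sum>b<d. (cmod (max_entangled d a b))\<^sup>2) = 1 / real d" if "a < d" for a
  proof -
    have "(\<Sum>b<d. (cmod (max_entangled d a b))\<^sup>2) = (\<Sum>b\<in>{..<d}. if b = a then 1 / real d else 0)"
      by (intro sum.cong) (auto simp: max_entangled_def norm_divide power_divide)
    then show ?thesis using that by simp
  qed
  then show ?thesis using \<open>d > 0\<close> by (simp add: unit_state_def)
qed

lemma schmidt_decomp_max_entangled: "schmidt_decomp d d (max_entangled d) d"
  unfolding schmidt_decomp_def
proof (intro exI conjI)
  show "\<forall>t<d. (\<lambda>_. 1 / sqrt (real d)) t > 0" by simp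
  show "orthonormal_fam d d ket" "orthonormal_fam d d ket" by (simp_all add: orthonormal_fam_ket)
  show "\<forall>a<d. \<forall>b<d. max_entangled d a b
      = (\<Sum>t<d. complex_of_real ((\<lambda>_. 1 / sqrt (real d)) t) * ket t a * ket t b)"
  proof (intro allI impI)
    fix a b assume "a < d" "b < d"
    have "(\<Sum>t<d. complex_of_real (1 / sqrt (real d)) * ket t a * ket t b)
        = (\<Sum>t\<in>{..<d}. if t = a then (if a = b then 1 / complex_of_real (sqrt (real d)) else 0) else 0)"
      by (intro sum.cong) (auto simp: ket_def)
    then show "max_entangled d a b
        = (\<Sum>t<d. complex_of_real ((\<lambda>_. 1 / sqrt (real d)) t) * ket t a * ket t b)"
      using \<open>a < d\<close> \<open>b < d\<close> by (simp add: max_entangled_def)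
  qed
qed

text \<open>Determinants of the leading \<open>2 \<times> 2\<close> and \<open>3 \<times> 3\<close> blocks; they vanish on matrices
  of rank one resp. two, which bounds the Schmidt rank from below.\<close>

definition det2 :: "cmat \<Rightarrow> complex" where
  "det2 M = M 0 0 * M 1 1 - M 0 1 * M 1 0"

definition det3 :: "cmat \<Rightarrow> complex" where
  "det3 M = M 0 0 * M 1 1 * M 2 2 + M 0 1 * M 1 2 * M 2 0 + M 0 2 * M 1 0 * M 2 1
    - M 0 2 * M 1 1 * M 2 0 - M 0 0 * M 1 2 * M 2 1 - M 0 1 * M 1 0 * M 2 2"

lemma det2_eq_0_of_schmidt_decomp: "schmidt_decomp 2 2 Phi r \<Longrightarrow> r < 2 \<Longrightarrow> det2 Phi = 0"
proof -
  assume "schmidt_decomp 2 2 Phi r" "r < 2"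
  then obtain lam u v where dec: "\<forall>a<2. \<forall>b<2. Phi a b = (\<Sum>t<r. complex_of_real (lam t) * u t a * v t b)"
    unfolding schmidt_decomp_def by blast
  define p where "p a = (if 0 < r then complex_of_real (lam 0) * u 0 a else 0)" for a
  have "Phi a b = p a * v 0 b" if "a < 2" "b < 2" for a b
    using dec that \<open>r < 2\<close> by (auto simp: p_def less_Suc_eq numeral_2_eq_2)
  then show "det2 Phi = 0" by (simp add: det2_def)
qed

lemma det3_eq_0_of_schmidt_decomp: "schmidt_decomp 3 3 Phi r \<Longrightarrow> r < 3 \<Longrightarrow> det3 Phi = 0"
proof -
  assume "schmidt_decomp 3 3 Phi r" "r < 3"
  then obtain lam u v where dec: "\<forall>a<3. \<forall>b<3. Phi a b = (\<Sum>t<r. complex_of_real (lam t) * u t a * v t b)"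
    unfolding schmidt_decomp_def by blast
  define p where "p a = (if 0 < r then complex_of_real (lam 0) * u 0 a else 0)" for a
  define p' where "p' a = (if 1 < r then complex_of_real (lam 1) * u 1 a else 0)" for a
  have "Phi a b = p a * v 0 b + p' a * v 1 b" if "a < 3" "b < 3" for a b
    using dec that \<open>r < 3\<close> by (auto simp: p_def p'_def less_Suc_eq eval_nat_numeral)
  then have "det3 Phi = det3 (\<lambda>a b. p a * v 0 b + p' a * v 1 b)" by (simp add: det3_def)
  also have "\<dots> = 0" unfolding det3_def by algebra
  finally show "det3 Phi = 0" .
qed

lemma schmidt_rank_max_entangled_2: "schmidt_rank 2 2 (max_entangled 2) = 2"
  unfolding schmidt_rank_def
proof (rule Least_equality)
  show "schmidt_decomp 2 2 (max_entangled 2) 2" by (rule schmidt_decomp_max_entangled)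
  show "2 \<le> r" if "schmidt_decomp 2 2 (max_entangled 2) r" for r
    using det2_eq_0_of_schmidt_decomp[OF that] by (force simp: det2_def max_entangled_def)
qed

lemma schmidt_rank_max_entangled_3: "schmidt_rank 3 3 (max_entangled 3) = 3"
  unfolding schmidt_rank_def
proof (rule Least_equality)
  show "schmidt_decomp 3 3 (max_entangled 3) 3" by (rule schmidt_decomp_max_entangled)
  show "3 \<le> r" if "schmidt_decomp 3 3 (max_entangled 3) r" for r
    using det3_eq_0_of_schmidt_decomp[OF that] by (force simp: det3_def max_entangled_def)
qed

section \<open>A one-way protocol with a resource of Schmidt rank three\<close>

text \<open>Alice teleports her share through \<open>max_entangled 3\<close>: she measures her two qutrits
  along the vectors \<open>\<Sum>\<^sub>i \<sigma>\<^sub>f(i) |i\<rangle>|i + e\<rangle> / 2\<close> (\<open>e < 3\<close>, four real sign patterns \<open>\<sigma>\<^sub>f\<close>).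
  Bob's qutrit then carries her input up to a shift and signs known from the outcome, so he
  can measure in the correspondingly twisted product basis of the nine states. Outcome \<open>m\<close>
  encodes \<open>(e, f) = (m div 4, m mod 4)\<close>, and the index \<open>3 i + k\<close> stands for \<open>|i\<rangle>|k\<rangle>\<close>.\<close>

definition sign_pattern :: "nat \<Rightarrow> nat \<Rightarrow> complex" where
  "sign_pattern f i = (if f = 0 then 1 else if i + 1 = f then 1 else -1)"

definition alice_bell_row :: "nat \<Rightarrow> cmat" where
  "alice_bell_row m = (\<lambda>r c. if r = 0 \<and> c < 9 \<and> c mod 3 = (c div 3 + m div 4) mod 3
     then sign_pattern (m mod 4) (c div 3) / 2 else 0)"

definition unshift :: "nat \<Rightarrow> nat \<Rightarrow> nat" where
  "unshift e l = (l + 3 - e) mod 3"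

definition alice_factor :: "nat \<Rightarrow> cvec" where
  "alice_factor n = fst (nine_states ! n)"

definition bob_factor :: "nat \<Rightarrow> cvec" where
  "bob_factor n = snd (nine_states ! n)"

definition bob_test_row :: "nat \<Rightarrow> nat \<Rightarrow> cmat" where
  "bob_test_row m n = (\<lambda>r b. if r = 0 \<and> b < 9 then bob_factor n (b div 3) *
     (sign_pattern (m mod 4) (unshift (m div 4) (b mod 3)) * alice_factor n (unshift (m div 4) (b mod 3)))
     else 0)"

lemma less_3_cases:
  assumes "(a::nat) < 3" obtains "a = 0" | "a = 1" | "a = 2"
  using assms by fastforce

lemma sum_3: "(\<Sum>j<(3::nat). f j) = f 0 + f 1 + (f 2 :: 'a :: comm_monoid_add)"
  by (simp add: eval_nat_numeral)
lemma sum_4: "(\<Sum>j<(4::nat). f j) = f 0 + f 1 + f 2 + (f 3 :: 'a :: comm_monoid_add)"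
  by (simp add: eval_nat_numeral)
lemma sum_9: "(\<Sum>j<(9::nat). f j) = f 0 + f 1 + f 2 + f 3 + f 4 + f 5 + f 6 + f 7 + (f 8 :: 'a :: comm_monoid_add)"
  by (simp add: eval_nat_numeral)

lemma sign_pattern_sq: "sign_pattern f i * sign_pattern f i = 1"
  by (simp add: sign_pattern_def)

lemma cnj_sign_pattern: "cnj (sign_pattern f i) = sign_pattern f i"
  by (simp add: sign_pattern_def)

lemma sign_pattern_orthogonal:
  "i < 3 \<Longrightarrow> i' < 3 \<Longrightarrow> (\<Sum>f<4. sign_pattern f i * sign_pattern f i') = (if i = i' then 4 else 0)"
  by (elim less_3_cases) (simp_all add: sum_4 sign_pattern_def)

lemma unshift_less: "unshift e l < 3"
  by (simp add: unshift_def)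

lemma unshift_inj: "e < 3 \<Longrightarrow> l < 3 \<Longrightarrow> l' < 3 \<Longrightarrow> unshift e l = unshift e l' \<longleftrightarrow> l = l'"
  by (elim less_3_cases) (simp_all add: unshift_def)

lemma sum_shift: "e < 3 \<Longrightarrow> l < 3 \<Longrightarrow> (\<Sum>i<3. if l = (i + e) mod 3 then h i else 0) = (h (unshift e l) :: complex)"
  by (elim less_3_cases) (simp_all add: sum_3 unshift_def)

lemma sum_unshift: "e < 3 \<Longrightarrow> (\<Sum>l<3. h (unshift e l)) = (\<Sum>i<3. h i :: complex)"
  by (elim less_3_cases) (simp_all add: sum_3 unshift_def ac_simps numeral_2_eq_2)

lemma kraus_alice_bell: "kraus 9 1 (map alice_bell_row [0..<12])"
  unfolding kraus_def
proof (intro allI impI)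
  fix c c' :: nat assume c: "c < 9" and c': "c' < 9"
  define i where "i = c div 3"
  define i' where "i' = c' div 3"
  have i: "i < 3" "i' < 3" using c c' unfolding i_def i'_def by auto
  have "(\<Sum>m<length (map alice_bell_row [0..<12]). \<Sum>r<1.
      cnj ((map alice_bell_row [0..<12] ! m) r c) * (map alice_bell_row [0..<12] ! m) r c')
      = (\<Sum>m<3 * 4. cnj (alice_bell_row m 0 c) * alice_bell_row m 0 c')"
    by simp
  also have "\<dots> = (\<Sum>e<3. (if c mod 3 = (i + e) mod 3 then 1 else 0) *
      (if c' mod 3 = (i' + e) mod 3 then 1 else 0) * ((\<Sum>f<4. sign_pattern f i * sign_pattern f i') / 4))"
    unfolding sum_mult_blocks sum_divide_distrib sum_distrib_left
    by (intro sum.cong refl) (auto simp: alice_bell_row_def c c' i_def i'_def cnj_sign_pattern)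
  also have "\<dots> = (if c = c' then 1 else 0)"
  proof (cases "i = i'")
    case True
    then have "c = c' \<longleftrightarrow> c mod 3 = c' mod 3"
      unfolding i_def i'_def by (metis div_mult_mod_eq)
    have "(\<Sum>e<3. (if c mod 3 = (i + e) mod 3 then 1 else 0) *
        (if c' mod 3 = (i + e) mod 3 then 1 else 0)) = (if c mod 3 = c' mod 3 then 1 else (0::complex))"
      using i(1) by (elim less_3_cases) (auto simp: sum_3)
    then show ?thesis using True sign_pattern_orthogonal[OF i] \<open>c = c' \<longleftrightarrow> _\<close> by simp
  next
    case False
    then show ?thesis using sign_pattern_orthogonal[OF i] i_def i'_def by auto
  qed
  finally show "(\<Sum>m<length (map alice_bell_row [0..<12]). \<Sum>r<1.
      cnj ((map alice_bell_row [0..<12] ! m) r c) * (map alice_bell_row [0..<12] ! m) r c')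
      = (if c = c' then 1 else 0)" .
qed

lemma alice_factor_simps:
  "alice_factor 0 = ket 0" "alice_factor 1 = ket 0" "alice_factor (Suc 0) = ket 0"
  "alice_factor 2 = ket_plus 0 1" "alice_factor 3 = ket_minus 0 1" "alice_factor 4 = ket 2"
  "alice_factor 5 = ket 2" "alice_factor 6 = ket_plus 1 2" "alice_factor 7 = ket_minus 1 2"
  "alice_factor 8 = ket 1"
  by (simp_all add: alice_factor_def nine_states_def)

lemma bob_factor_simps:
  "bob_factor 0 = ket_plus 0 1" "bob_factor 1 = ket_minus 0 1" "bob_factor (Suc 0) = ket_minus 0 1"
  "bob_factor 2 = ket 2" "bob_factor 3 = ket 2" "bob_factor 4 = ket_plus 1 2"
  "bob_factor 5 = ket_minus 1 2" "bob_factor 6 = ket 0" "bob_factor 7 = ket 0" "bob_factor 8 = ket 1"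
  by (simp_all add: bob_factor_def nine_states_def)

lemma less_9_cases:
  assumes "(n::nat) < 9"
  obtains "n = 0" | "n = 1" | "n = 2" | "n = 3" | "n = 4" | "n = 5" | "n = 6" | "n = 7" | "n = 8"
  using assms by fastforce

lemmas nine_factor_simps = alice_factor_simps bob_factor_simps ket_plus_eq ket_minus_eq ket_def

lemma nine_states_nth: "nine_states ! n = (alice_factor n, bob_factor n)"
  by (simp add: alice_factor_def bob_factor_def)

lemma nine_states_eq_map: "nine_states = map (\<lambda>n. (alice_factor n, bob_factor n)) [0..<9]"
  by (rule nth_equalityI) (simp_all add: nine_states_def flip: nine_states_nth)

lemma cnj_nine_factors:
  "n < 9 \<Longrightarrow> cnj (alice_factor n i) = alice_factor n i"
  "n < 9 \<Longrightarrow> cnj (bob_factor n i) = bob_factor n i"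
  by (elim less_9_cases; simp add: nine_factor_simps cnj_inv_sqrt2)+

text \<open>All factors are real, so these inner products need no conjugation.\<close>

lemma nine_states_orthogonal:
  "n < 9 \<Longrightarrow> k < 9 \<Longrightarrow> n \<noteq> k \<Longrightarrow>
    (\<Sum>j<3. bob_factor n j * bob_factor k j) * (\<Sum>i<3. alice_factor n i * alice_factor k i) = 0"
  unfolding sum_3 by (elim less_9_cases; simp add: nine_factor_simps inv_sqrt2_sq)

lemma nine_states_complete:
  "i < 3 \<Longrightarrow> i' < 3 \<Longrightarrow> j < 3 \<Longrightarrow> j' < 3 \<Longrightarrow>
    (\<Sum>n<9. alice_factor n i * alice_factor n i' * (bob_factor n j * bob_factor n j'))
      = (if i = i' \<and> j = j' then 1 else 0)"
  unfolding sum_9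
  by (elim less_3_cases; simp add: nine_factor_simps inv_sqrt2_sq)

lemma alice_bell_row_block:
  "i < 3 \<Longrightarrow> k < 3 \<Longrightarrow> alice_bell_row m 0 (i * 3 + k)
    = (if k = (i + m div 4) mod 3 then sign_pattern (m mod 4) i / 2 else 0)"
  by (simp add: alice_bell_row_def)

lemma alice_bell_teleports:
  assumes m: "m < 12"
  defines "e \<equiv> m div 4" and "f \<equiv> m mod 4"
  shows "alice_op 9 (alice_bell_row m) (tensor_anc 3 3 (max_entangled 3) (x, y)) 0 b =
    y (b div 3) * (sign_pattern f (unshift e (b mod 3)) * x (unshift e (b mod 3)))
      / (2 * complex_of_real (sqrt 3))"
proof -
  define l where "l = b mod 3"
  have e3: "e < 3" using m unfolding e_def by simp
  have l3: "l < 3" unfolding l_def by simp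
  have "alice_op 9 (alice_bell_row m) (tensor_anc 3 3 (max_entangled 3) (x, y)) 0 b
      = (\<Sum>i<3. \<Sum>k<3. alice_bell_row m 0 (i * 3 + k) * (x i * y (b div 3) * max_entangled 3 k l))"
    unfolding alice_op_def tensor_anc_def l_def by (subst sum_mult_blocks[where n = 3 and q = 3, simplified]) simp
  also have "\<dots> = (\<Sum>i<3. if l = (i + e) mod 3
      then sign_pattern f i * (x i * y (b div 3)) / (2 * complex_of_real (sqrt 3)) else 0)"
  proof (intro sum.cong refl)
    fix i assume "i \<in> {..<3::nat}"
    then have "(\<Sum>k<3. alice_bell_row m 0 (i * 3 + k) * (x i * y (b div 3) * max_entangled 3 k l))
        = (\<Sum>k\<in>{..<3}. if k = l then (if l = (i + e) mod 3 then sign_pattern f i / 2 else 0) *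
            (x i * y (b div 3) / complex_of_real (sqrt 3)) else 0)"
      by (intro sum.cong) (auto simp: alice_bell_row_block e_def f_def max_entangled_def)
    then show "(\<Sum>k<3. alice_bell_row m 0 (i * 3 + k) * (x i * y (b div 3) * max_entangled 3 k l))
        = (if l = (i + e) mod 3 then sign_pattern f i * (x i * y (b div 3)) / (2 * complex_of_real (sqrt 3)) else 0)"
      using l3 by simp
  qed
  also have "\<dots> = sign_pattern f (unshift e l) * (x (unshift e l) * y (b div 3)) / (2 * complex_of_real (sqrt 3))"
    by (rule sum_shift[OF e3 l3])
  finally show ?thesis unfolding l_def by (simp add: ac_simps)
qed

lemma bob_test_after_alice_bell:
  assumes m: "m < 12"
  shows "bob_op 9 (bob_test_row m n) (alice_op 9 (alice_bell_row m) (tensor_anc 3 3 (max_entangled 3) (x, y))) 0 0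
    = (\<Sum>j<3. bob_factor n j * y j) * (\<Sum>i<3. alice_factor n i * x i) / (2 * complex_of_real (sqrt 3))"
proof -
  define e where "e = m div 4"
  define f where "f = m mod 4"
  have e3: "e < 3" using m unfolding e_def by simp
  have "bob_op 9 (bob_test_row m n) (alice_op 9 (alice_bell_row m) (tensor_anc 3 3 (max_entangled 3) (x, y))) 0 0
      = (\<Sum>j<3. \<Sum>l<3. (bob_factor n j * y j) * (alice_factor n (unshift e l) * x (unshift e l))
          / (2 * complex_of_real (sqrt 3)))"
    unfolding bob_op_def sum_mult_blocks[where n = 3 and q = 3, simplified]
  proof (intro sum.cong refl)
    fix j l assume "j \<in> {..<3::nat}" "l \<in> {..<3::nat}"
    then show "bob_test_row m n 0 (j * 3 + l) * alice_op 9 (alice_bell_row m)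
        (tensor_anc 3 3 (max_entangled 3) (x, y)) 0 (j * 3 + l)
      = bob_factor n j * y j * (alice_factor n (unshift e l) * x (unshift e l)) / (2 * complex_of_real (sqrt 3))"
      using sign_pattern_sq[of f "unshift e l"]
      by (simp add: alice_bell_teleports[OF m] bob_test_row_def e_def f_def ac_simps)
  qed
  also have "\<dots> = (\<Sum>j<3. bob_factor n j * y j) * (\<Sum>l<3. alice_factor n (unshift e l) * x (unshift e l))
      / (2 * complex_of_real (sqrt 3))"
    by (simp add: sum_distrib_left sum_distrib_right sum_divide_distrib) (rule sum.swap)
  finally show ?thesis using sum_unshift[OF e3, of "\<lambda>i. alice_factor n i * x i"] by simp
qed

lemma kraus_bob_test:
  assumes m: "m < 12"
  shows "kraus 9 1 (map (bob_test_row m) [0..<9])"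
  unfolding kraus_def
proof (intro allI impI)
  fix b b' :: nat assume b: "b < 9" and b': "b' < 9"
  define e where "e = m div 4"
  define f where "f = m mod 4"
  define j where "j = b div 3"
  define l where "l = unshift e (b mod 3)"
  define j' where "j' = b' div 3"
  define l' where "l' = unshift e (b' mod 3)"
  have e3: "e < 3" using m unfolding e_def by simp
  have jl: "j < 3" "j' < 3" "l < 3" "l' < 3"
    using b b' unfolding j_def j'_def l_def l'_def by (auto simp: unshift_less)
  have "(\<Sum>n<length (map (bob_test_row m) [0..<9]). \<Sum>r<1.
      cnj ((map (bob_test_row m) [0..<9] ! n) r b) * (map (bob_test_row m) [0..<9] ! n) r b')
      = (\<Sum>n<9. cnj (bob_test_row m n 0 b) * bob_test_row m n 0 b')"
    by simp
  also have "\<dots> = (\<Sum>n<9. alice_factor n l * alice_factor n l' * (bob_factor n j * bob_factor n j')) *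
      (sign_pattern f l * sign_pattern f l')"
    unfolding sum_distrib_right
    by (intro sum.cong refl)
      (simp add: bob_test_row_def b b' cnj_nine_factors cnj_sign_pattern e_def f_def j_def l_def j'_def l'_def ac_simps)
  also have "\<dots> = (if b = b' then 1 else 0)"
  proof -
    have iff: "l = l' \<and> j = j' \<longleftrightarrow> b = b'"
      using unshift_inj[OF e3, of "b mod 3" "b' mod 3"] unfolding j_def j'_def l_def l'_def
      by (metis div_mult_mod_eq mod_less_divisor zero_less_numeral)
    show ?thesis
    proof (cases "b = b'")
      case True
      with iff have "l' = l" "j' = j" by auto
      then show ?thesis using True jl by (simp add: nine_states_complete sign_pattern_sq)
    next
      case False
      with iff jl show ?thesis by (auto simp: nine_states_complete)
    qed
  qed
  finally show "(\<Sum>n<length (map (bob_test_row m) [0..<9]). \<Sum>r<1.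
      cnj ((map (bob_test_row m) [0..<9] ! n) r b) * (map (bob_test_row m) [0..<9] ! n) r b')
      = (if b = b' then 1 else 0)" .
qed

theorem one_way_max_entangled_3: "one_way_locc_dist (3 * 3) (3 * 3) (nine_with 3 3 (max_entangled 3))"
  unfolding one_way_locc_dist_def
proof (intro exI conjI allI impI)
  show "kraus (3 * 3) 1 (map alice_bell_row [0..<12])" using kraus_alice_bell by simp
  fix m assume "m < length (map alice_bell_row [0..<12])"
  then have m: "m < 12" by simp
  show "kraus (3 * 3) 1 (map (bob_test_row m) [0..<9])" using kraus_bob_test[OF m] by simp
  fix n assume "n < length (map (bob_test_row m) [0..<9])"
  then have n: "n < 9" by simp
  let ?S = "map (bob_op (3 * 3) (map (bob_test_row m) [0..<9] ! n) \<circ> alice_op (3 * 3) (map alice_bell_row [0..<12] ! m))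
      (nine_with 3 3 (max_entangled 3))"
  have "\<not> nonzero_state 1 1 (?S ! k)" if "k < 9" "k \<noteq> n" for k
  proof -
    have "?S ! k = bob_op 9 (bob_test_row m n) (alice_op 9 (alice_bell_row m)
        (tensor_anc 3 3 (max_entangled 3) (alice_factor k, bob_factor k)))"
      using that n m by (simp add: nine_with_def nine_states_eq_map)
    then show ?thesis
      using bob_test_after_alice_bell[OF m] nine_states_orthogonal[OF n that(1)] that(2)
      by (simp add: nonzero_state_def)
  qed
  moreover have "length ?S = 9" by (simp add: nine_with_def nine_states_def)
  ultimately show "identified 1 1 ?S" unfolding identified_def by metis
qed

section \<open>A two-way protocol with an EPR pair\<close>

text \<open>\<open>row_op d w\<close> is the outcome \<open>x \<mapsto> (\<Sum>c. w c * x c) |0\<rangle>\<close>, i.e. the bra of the complex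
  conjugate of \<open>w\<close>; every \<open>w\<close> used below is real.\<close>

definition row_op :: "nat \<Rightarrow> cvec \<Rightarrow> cmat" where
  "row_op d w = (\<lambda>r c. if r = 0 \<and> c < d then w c else 0)"

definition proj_op :: "nat \<Rightarrow> (nat \<Rightarrow> bool) \<Rightarrow> cmat" where
  "proj_op d P = (\<lambda>r c. if r = c \<and> c < d \<and> P c then 1 else 0)"

lemma alice_op_row_op: "alice_op d (row_op d w) psi a b = (if a = 0 then (\<Sum>c<d. w c * psi c b) else 0)"
  by (simp add: alice_op_def row_op_def)

lemma bob_op_row_op: "bob_op d (row_op d w) psi a r = (if r = 0 then (\<Sum>c<d. w c * psi a c) else 0)"
  by (simp add: bob_op_def row_op_def)

lemma alice_op_proj_op: "alice_op d (proj_op d P) psi a b = (if a < d \<and> P a then psi a b else 0)"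
proof -
  have "alice_op d (proj_op d P) psi a b = (\<Sum>c\<in>{..<d}. if c = a then (if a < d \<and> P a then psi a b else 0) else 0)"
    unfolding alice_op_def proj_op_def by (rule sum.cong) auto
  then show ?thesis by simp
qed

lemma bob_op_proj_op: "bob_op d (proj_op d P) psi a r = (if r < d \<and> P r then psi a r else 0)"
proof -
  have "bob_op d (proj_op d P) psi a r = (\<Sum>c\<in>{..<d}. if c = r then (if r < d \<and> P r then psi a r else 0) else 0)"
    unfolding bob_op_def proj_op_def by (rule sum.cong) auto
  then show ?thesis by simp
qed

lemma row_op_gram:
  assumes "c < d" "c' < d"
  shows "(\<Sum>r<d. cnj (row_op d w r c) * row_op d w r c') = cnj (w c) * w c'"
proof -
  have "(\<Sum>r<d. cnj (row_op d w r c) * row_op d w r c') = (\<Sum>r\<in>{..<d}. if r = 0 then cnj (w c) * w c' else 0)"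
    unfolding row_op_def using assms by (intro sum.cong refl) auto
  then show ?thesis using assms by simp
qed

lemma proj_op_gram:
  assumes "c < d" "c' < d"
  shows "(\<Sum>r<d. cnj (proj_op d P r c) * proj_op d P r c') = (if c = c' \<and> P c then 1 else 0)"
proof -
  have "(\<Sum>r<d. cnj (proj_op d P r c) * proj_op d P r c')
      = (\<Sum>r\<in>{..<d}. if r = c then (if c = c' \<and> P c then 1 else 0) else 0)"
    unfolding proj_op_def using assms by (intro sum.cong refl) auto
  then show ?thesis using assms by simp
qed

lemma locc_dist_add: "locc_dist n dA dB S \<Longrightarrow> locc_dist (n + k) dA dB S"
  by (induction k) auto

lemma locc_dist_mono: "locc_dist n dA dB S \<Longrightarrow> n \<le> n' \<Longrightarrow> locc_dist n' dA dB S"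
  using locc_dist_add[of n dA dB S "n' - n"] by simp

text \<open>Child protocols of different lengths are padded to a common length, here the sum
  of all lengths.\<close>

lemma two_way_locc_dist_alice_step:
  assumes "kraus dA dA' Ks"
    and "\<And>K. K \<in> set Ks \<Longrightarrow> two_way_locc_dist dA' dB (map (alice_op dA K \<circ> F) xs)"
  shows "two_way_locc_dist dA dB (map F xs)"
proof -
  have "\<forall>m<length Ks. \<exists>n. locc_dist n dA' dB (map (alice_op dA (Ks ! m)) (map F xs))"
    using assms(2) by (simp add: two_way_locc_dist_def)
  then obtain N where N: "\<And>m. m < length Ks \<Longrightarrow> locc_dist (N m) dA' dB (map (alice_op dA (Ks ! m)) (map F xs))"
    unfolding choice_iff' by blast
  have "locc_dist (\<Sum>m<length Ks. N m) dA' dB (map (alice_op dA (Ks ! m)) (map F xs))"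
    if "m < length Ks" for m
    using N[OF that] by (rule locc_dist_mono) (use that in \<open>simp add: member_le_sum\<close>)
  then have "locc_dist (Suc (\<Sum>m<length Ks. N m)) dA dB (map F xs)"
    using assms(1) unfolding locc_dist.simps by blast
  then show ?thesis unfolding two_way_locc_dist_def by blast
qed

lemma two_way_locc_dist_bob_step:
  assumes "kraus dB dB' Ls"
    and "\<And>L. L \<in> set Ls \<Longrightarrow> two_way_locc_dist dA dB' (map (bob_op dB L \<circ> F) xs)"
  shows "two_way_locc_dist dA dB (map F xs)"
proof -
  have "\<forall>m<length Ls. \<exists>n. locc_dist n dA dB' (map (bob_op dB (Ls ! m)) (map F xs))"
    using assms(2) by (simp add: two_way_locc_dist_def)
  then obtain N where N: "\<And>m. m < length Ls \<Longrightarrow> locc_dist (N m) dA dB' (map (bob_op dB (Ls ! m)) (map F xs))"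
    unfolding choice_iff' by blast
  have "locc_dist (\<Sum>m<length Ls. N m) dA dB' (map (bob_op dB (Ls ! m)) (map F xs))"
    if "m < length Ls" for m
    using N[OF that] by (rule locc_dist_mono) (use that in \<open>simp add: member_le_sum\<close>)
  then have "locc_dist (Suc (\<Sum>m<length Ls. N m)) dA dB (map F xs)"
    using assms(1) unfolding locc_dist.simps by blast
  then show ?thesis unfolding two_way_locc_dist_def by blast
qed

definition singles_out :: "nat \<Rightarrow> nat \<Rightarrow> nat \<Rightarrow> (nat \<Rightarrow> cmat) \<Rightarrow> bool" where
  "singles_out dA dB k0 F \<longleftrightarrow> (\<forall>k<9. k \<noteq> k0 \<longrightarrow> (\<forall>a<dA. \<forall>b<dB. F k a b = 0))"

lemma two_way_locc_dist_singles_out: "singles_out dA dB k0 F \<Longrightarrow> two_way_locc_dist dA dB (map F [0..<9])"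
  unfolding two_way_locc_dist_def
  by (rule exI[of _ 0]) (auto simp: singles_out_def identified_def nonzero_state_def)

lemma less_2_cases:
  assumes "(a::nat) < 2" obtains "a = 0" | "a = 1"
  using assms by fastforce

lemma less_6_cases:
  assumes "(a::nat) < 6" obtains "a = 0" | "a = 1" | "a = 2" | "a = 3" | "a = 4" | "a = 5"
  using assms by fastforce

lemma sum_2: "(\<Sum>j<(2::nat). f j) = f 0 + (f 1 :: 'a :: comm_monoid_add)"
  by (simp add: eval_nat_numeral)
lemma sum_6: "(\<Sum>j<(6::nat). f j) = f 0 + f 1 + f 2 + f 3 + f 4 + (f 5 :: 'a :: comm_monoid_add)"
  by (simp add: eval_nat_numeral)

lemma max_entangled_2: "max_entangled 2 k l = (if k = l \<and> k < 2 then inv_sqrt2 else 0)"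
  by (simp add: max_entangled_def inv_sqrt2_def divide_inverse)

text \<open>Alice measures her half of the EPR pair in the computational basis, but relabels the
  outcome when her qutrit is \<open>|2\<rangle>\<close>: after outcome \<open>\<rho>\<close> Bob's qubit is \<open>|1 - \<rho>\<rangle>\<close> if Alice
  holds \<open>|2\<rangle>\<close> and \<open>|\<rho>\<rangle>\<close> otherwise. Bob's qutrit and qubit form a six-dimensional
  system indexed by \<open>2 j + t\<close>.\<close>

definition ancilla_bit :: "nat \<Rightarrow> nat \<Rightarrow> nat" where
  "ancilla_bit \<rho> a = (if a = 2 then 1 - \<rho> else \<rho>)"

definition alice_tag_op :: "nat \<Rightarrow> cmat" where
  "alice_tag_op \<rho> = (\<lambda>a c. if a < 3 \<and> c = 2 * a + ancilla_bit \<rho> a then 1 else 0)"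

definition tagged_state :: "nat \<Rightarrow> nat \<Rightarrow> cmat" where
  "tagged_state \<rho> k a b =
     alice_factor k a * bob_factor k (b div 2) * max_entangled 2 (ancilla_bit \<rho> a) (b mod 2)"

lemma kraus_alice_tag: "kraus 6 3 [alice_tag_op 0, alice_tag_op 1]"
  unfolding kraus_def
  by (intro allI impI, simp add: sum_2 sum_3, elim less_6_cases; simp add: alice_tag_op_def ancilla_bit_def)

lemma alice_tag_nine_with:
  assumes "\<rho> < 2"
  shows "map (alice_op 6 (alice_tag_op \<rho>)) (nine_with 2 2 (max_entangled 2)) = map (tagged_state \<rho>) [0..<9]"
proof -
  have "alice_op 6 (alice_tag_op \<rho>) (tensor_anc 2 2 (max_entangled 2) (alice_factor k, bob_factor k)) a b
      = tagged_state \<rho> k a b" if "k < 9" for k a b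
  proof (cases "a < 3")
    case True
    have t: "ancilla_bit \<rho> a < 2" using assms by (auto simp: ancilla_bit_def)
    have "alice_op 6 (alice_tag_op \<rho>) (tensor_anc 2 2 (max_entangled 2) (alice_factor k, bob_factor k)) a b
        = (\<Sum>c\<in>{..<6}. if c = 2 * a + ancilla_bit \<rho> a then alice_factor k a * bob_factor k (b div 2)
            * max_entangled 2 (ancilla_bit \<rho> a) (b mod 2) else 0)"
      unfolding alice_op_def alice_tag_op_def tensor_anc_def using True t by (intro sum.cong refl) auto
    then show ?thesis using True t by (simp add: tagged_state_def)
  next
    case False
    then have "alice_factor k a = 0" using that by (elim less_9_cases) (auto simp: nine_factor_simps)
    then show ?thesis using False by (simp add: alice_op_def alice_tag_op_def tagged_state_def)
  qed
  then show ?thesis unfolding nine_with_def nine_states_eq_map by (simp add: fun_eq_iff)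
qed

text \<open>\<open>anc_ket t w\<close> is the vector \<open>w \<otimes> |t\<rangle>\<close> of Bob's qutrit and qubit.\<close>

definition anc_ket :: "nat \<Rightarrow> cvec \<Rightarrow> cvec" where
  "anc_ket t w c = (if c mod 2 = t then w (c div 2) else 0)"

definition bob_rest :: "nat \<Rightarrow> nat \<Rightarrow> bool" where
  "bob_rest \<rho> c \<longleftrightarrow> (c mod 2 = \<rho> \<and> c div 2 \<le> 1) \<or> (c mod 2 \<noteq> \<rho> \<and> c div 2 = 0)"

definition bob_first_meas :: "nat \<Rightarrow> cmat list" where
  "bob_first_meas \<rho> = [row_op 6 (anc_ket (1 - \<rho>) (ket_plus 1 2)), row_op 6 (anc_ket (1 - \<rho>) (ket_minus 1 2)),
     row_op 6 (ket (4 + \<rho>)), proj_op 6 (bob_rest \<rho>)]"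

definition alice_meas_01_2 :: "cmat list" where
  "alice_meas_01_2 = [row_op 3 (ket_plus 0 1), row_op 3 (ket_minus 0 1), row_op 3 (ket 2)]"

definition alice_split_0 :: "cmat list" where
  "alice_split_0 = [proj_op 3 (\<lambda>a. a = 0), proj_op 3 (\<lambda>a. a \<noteq> 0)]"

definition bob_meas_after_0 :: "nat \<Rightarrow> cmat list" where
  "bob_meas_after_0 \<rho> = [row_op 6 (anc_ket \<rho> (ket_plus 0 1)), row_op 6 (anc_ket \<rho> (ket_minus 0 1)),
     row_op 6 (ket (4 + \<rho>)), row_op 6 (ket (1 - \<rho>)), row_op 6 (ket (3 - \<rho>)), row_op 6 (ket (5 - \<rho>))]"

definition bob_meas_after_12 :: "nat \<Rightarrow> cmat list" where
  "bob_meas_after_12 \<rho> = [row_op 6 (ket_plus 0 1), row_op 6 (ket_minus 0 1),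
     row_op 6 (ket (2 + \<rho>)), row_op 6 (ket (3 - \<rho>)), row_op 6 (ket 4), row_op 6 (ket 5)]"

definition alice_meas_12_0 :: "cmat list" where
  "alice_meas_12_0 = [row_op 3 (ket_plus 1 2), row_op 3 (ket_minus 1 2), row_op 3 (ket 0)]"

lemmas protocol_simps = nine_factor_simps max_entangled_2 tagged_state_def ancilla_bit_def anc_ket_def
  bob_rest_def inv_sqrt2_sq cnj_inv_sqrt2

lemma kraus_protocol_meas:
  assumes "\<rho> < 2"
  shows "kraus 6 6 (bob_first_meas \<rho>)" "kraus 3 3 alice_meas_01_2" "kraus 3 3 alice_split_0"
    "kraus 6 6 (bob_meas_after_0 \<rho>)" "kraus 6 6 (bob_meas_after_12 \<rho>)" "kraus 3 3 alice_meas_12_0"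
  using assms unfolding kraus_def bob_first_meas_def alice_meas_01_2_def alice_split_0_def
    bob_meas_after_0_def bob_meas_after_12_def alice_meas_12_0_def
  by (intro allI impI; simp add: lessThan_Suc row_op_gram proj_op_gram;
      elim less_2_cases less_3_cases less_6_cases; simp add: protocol_simps)+

text \<open>The third argument of \<open>singles_out\<close> is the only one of the nine states that can
  reach the leaf.\<close>

lemma protocol_leaves:
  fixes \<rho> :: nat
  defines "T \<equiv> tagged_state \<rho>"
  defines "G \<equiv> bob_op 6 (proj_op 6 (bob_rest \<rho>)) \<circ> T"
  defines "H \<equiv> alice_op 3 (proj_op 3 (\<lambda>a. a \<noteq> 0)) \<circ> G"
  assumes "\<rho> < 2"
  shows "singles_out 3 6 4 (bob_op 6 (row_op 6 (anc_ket (1 - \<rho>) (ket_plus 1 2))) \<circ> T)"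
    "singles_out 3 6 5 (bob_op 6 (row_op 6 (anc_ket (1 - \<rho>) (ket_minus 1 2))) \<circ> T)"
    "singles_out 3 6 2 (alice_op 3 (row_op 3 (ket_plus 0 1)) \<circ> (bob_op 6 (row_op 6 (ket (4 + \<rho>))) \<circ> T))"
    "singles_out 3 6 3 (alice_op 3 (row_op 3 (ket_minus 0 1)) \<circ> (bob_op 6 (row_op 6 (ket (4 + \<rho>))) \<circ> T))"
    "singles_out 3 6 0 (alice_op 3 (row_op 3 (ket 2)) \<circ> (bob_op 6 (row_op 6 (ket (4 + \<rho>))) \<circ> T))"
    "singles_out 3 6 0 (bob_op 6 (row_op 6 (anc_ket \<rho> (ket_plus 0 1))) \<circ> (alice_op 3 (proj_op 3 (\<lambda>a. a = 0)) \<circ> G))"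
    "singles_out 3 6 1 (bob_op 6 (row_op 6 (anc_ket \<rho> (ket_minus 0 1))) \<circ> (alice_op 3 (proj_op 3 (\<lambda>a. a = 0)) \<circ> G))"
    "singles_out 3 6 0 (bob_op 6 (row_op 6 (ket (4 + \<rho>))) \<circ> (alice_op 3 (proj_op 3 (\<lambda>a. a = 0)) \<circ> G))"
    "singles_out 3 6 0 (bob_op 6 (row_op 6 (ket (1 - \<rho>))) \<circ> (alice_op 3 (proj_op 3 (\<lambda>a. a = 0)) \<circ> G))"
    "singles_out 3 6 0 (bob_op 6 (row_op 6 (ket (3 - \<rho>))) \<circ> (alice_op 3 (proj_op 3 (\<lambda>a. a = 0)) \<circ> G))"
    "singles_out 3 6 0 (bob_op 6 (row_op 6 (ket (5 - \<rho>))) \<circ> (alice_op 3 (proj_op 3 (\<lambda>a. a = 0)) \<circ> G))"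
    "singles_out 3 6 8 (bob_op 6 (row_op 6 (ket (2 + \<rho>))) \<circ> H)"
    "singles_out 3 6 0 (bob_op 6 (row_op 6 (ket (3 - \<rho>))) \<circ> H)"
    "singles_out 3 6 0 (bob_op 6 (row_op 6 (ket 4)) \<circ> H)"
    "singles_out 3 6 0 (bob_op 6 (row_op 6 (ket 5)) \<circ> H)"
    "singles_out 3 6 6 (alice_op 3 (row_op 3 (ket_plus 1 2)) \<circ> (bob_op 6 (row_op 6 (ket_plus 0 1)) \<circ> H))"
    "singles_out 3 6 7 (alice_op 3 (row_op 3 (ket_minus 1 2)) \<circ> (bob_op 6 (row_op 6 (ket_plus 0 1)) \<circ> H))"
    "singles_out 3 6 0 (alice_op 3 (row_op 3 (ket 0)) \<circ> (bob_op 6 (row_op 6 (ket_plus 0 1)) \<circ> H))"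
    "singles_out 3 6 7 (alice_op 3 (row_op 3 (ket_plus 1 2)) \<circ> (bob_op 6 (row_op 6 (ket_minus 0 1)) \<circ> H))"
    "singles_out 3 6 6 (alice_op 3 (row_op 3 (ket_minus 1 2)) \<circ> (bob_op 6 (row_op 6 (ket_minus 0 1)) \<circ> H))"
    "singles_out 3 6 0 (alice_op 3 (row_op 3 (ket 0)) \<circ> (bob_op 6 (row_op 6 (ket_minus 0 1)) \<circ> H))"
  unfolding singles_out_def T_def G_def H_def
  by (insert assms(4), intro allI impI; simp only: o_apply alice_op_row_op bob_op_row_op alice_op_proj_op bob_op_proj_op
      sum_6 sum_3; elim less_2_cases less_3_cases less_9_cases; simp add: protocol_simps)+

theorem two_way_tagged_states:
  assumes \<rho>: "\<rho> < 2"
  shows "two_way_locc_dist 3 6 (map (tagged_state \<rho>) [0..<9])"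
proof -
  let ?T = "tagged_state \<rho>"
  let ?G = "bob_op 6 (proj_op 6 (bob_rest \<rho>)) \<circ> ?T"
  let ?H = "alice_op 3 (proj_op 3 (\<lambda>a. a \<noteq> 0)) \<circ> ?G"
  note leaf = protocol_leaves[OF \<rho>, THEN two_way_locc_dist_singles_out]
  note kr = kraus_protocol_meas[OF \<rho>]
  have C: "two_way_locc_dist 3 6 (map (bob_op 6 (row_op 6 w) \<circ> ?H) [0..<9])"
    if "w = ket_plus 0 1 \<or> w = ket_minus 0 1" for w
    by (rule two_way_locc_dist_alice_step[OF kr(6)], insert that)
      (unfold alice_meas_12_0_def set_simps, elim disjE insertE emptyE; simp only: leaf)
  have H: "two_way_locc_dist 3 6 (map ?H [0..<9])"
    by (rule two_way_locc_dist_bob_step[OF kr(5)])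
      (unfold bob_meas_after_12_def set_simps, elim insertE emptyE; simp only: leaf C simp_thms)
  have H0: "two_way_locc_dist 3 6 (map (alice_op 3 (proj_op 3 (\<lambda>a. a = 0)) \<circ> ?G) [0..<9])"
    by (rule two_way_locc_dist_bob_step[OF kr(4)])
      (unfold bob_meas_after_0_def set_simps, elim insertE emptyE; simp only: leaf)
  have G: "two_way_locc_dist 3 6 (map ?G [0..<9])"
    by (rule two_way_locc_dist_alice_step[OF kr(3)])
      (unfold alice_split_0_def set_simps, elim insertE emptyE; simp only: H H0)
  have E: "two_way_locc_dist 3 6 (map (bob_op 6 (row_op 6 (ket (4 + \<rho>))) \<circ> ?T) [0..<9])"
    by (rule two_way_locc_dist_alice_step[OF kr(2)])
      (unfold alice_meas_01_2_def set_simps, elim insertE emptyE; simp only: leaf)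
  show ?thesis
    by (rule two_way_locc_dist_bob_step[OF kr(1)])
      (unfold bob_first_meas_def set_simps, elim insertE emptyE; simp only: leaf E G)
qed

theorem two_way_max_entangled_2: "two_way_locc_dist (3 * 2) (3 * 2) (nine_with 2 2 (max_entangled 2))"
proof -
  have "two_way_locc_dist 6 6 (map id (nine_with 2 2 (max_entangled 2)))"
  proof (rule two_way_locc_dist_alice_step[OF kraus_alice_tag])
    fix K assume "K \<in> set [alice_tag_op 0, alice_tag_op 1]"
    then show "two_way_locc_dist 3 6 (map (alice_op 6 K \<circ> id) (nine_with 2 2 (max_entangled 2)))"
      using two_way_tagged_states[of 0] two_way_tagged_states[of 1]
        alice_tag_nine_with[of 0] alice_tag_nine_with[of 1] by auto
  qed
  then show ?thesis by simp
qed

theorem mainTheorem12: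
  shows
   "(\<forall>dA' dB' Phi. dA' > 0 \<and> dB' > 0 \<and> unit_state dA' dB' Phi \<and>
        one_way_locc_dist (3 * dA') (3 * dB') (nine_with dA' dB' Phi)
        \<longrightarrow> schmidt_rank dA' dB' Phi \<ge> 3)
    \<and> (\<exists>dA' dB' Phi. dA' > 0 \<and> dB' > 0 \<and> unit_state dA' dB' Phi \<and>
        schmidt_rank dA' dB' Phi = 3 \<and>
        one_way_locc_dist (3 * dA') (3 * dB') (nine_with dA' dB' Phi))
    \<and> (\<exists>dA' dB' Phi. dA' > 0 \<and> dB' > 0 \<and> unit_state dA' dB' Phi \<and>
        schmidt_rank dA' dB' Phi = 2 \<and>
        two_way_locc_dist (3 * dA') (3 * dB') (nine_with dA' dB' Phi))"
proof (intro conjI)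
  show "\<forall>dA' dB' Phi. dA' > 0 \<and> dB' > 0 \<and> unit_state dA' dB' Phi \<and>
      one_way_locc_dist (3 * dA') (3 * dB') (nine_with dA' dB' Phi) \<longrightarrow> schmidt_rank dA' dB' Phi \<ge> 3"
    using one_way_schmidt_rank_ge_3 by blast
  show "\<exists>dA' dB' Phi. dA' > 0 \<and> dB' > 0 \<and> unit_state dA' dB' Phi \<and> schmidt_rank dA' dB' Phi = 3 \<and>
      one_way_locc_dist (3 * dA') (3 * dB') (nine_with dA' dB' Phi)"
    using unit_state_max_entangled[of 3] schmidt_rank_max_entangled_3 one_way_max_entangled_3
    by (intro exI[of _ "3::nat"] exI[of _ "max_entangled 3"]) simp
  show "\<exists>dA' dB' Phi. dA' > 0 \<and> dB' > 0 \<and> unit_state dA' dB' Phi \<and> schmidt_rank dA' dB' Phi = 2 \<and>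
      two_way_locc_dist (3 * dA') (3 * dB') (nine_with dA' dB' Phi)"
    using unit_state_max_entangled[of 2] schmidt_rank_max_entangled_2 two_way_max_entangled_2
    by (intro exI[of _ "2::nat"] exI[of _ "max_entangled 2"]) simp
qed

end
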